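(* Consider an ergodic Jackson network process $\mathbf{X}$ (setting in the context) whose extended routing matrix $r$ is reversible (with respect to $\eta$), with stationary distribution $\xi(\mathbf{n})=\prod_{j=1}^{J}\prod_{k=1}^{n_j}\frac{\eta_j}{\mu_j(k)}C(j)^{-1}$. Let $\boldsymbol{\gamma}=(\gamma_j:j\in\overline{J})\in[0,\infty)^{\overline{J}}$, $\|\boldsymbol{\gamma}\|_\infty=\max_j\gamma_j$, and define $\alpha_0=1$, $\alpha_j=\gamma_j$ for $j\in\overline{J}$ if $\|\boldsymbol{\gamma}\|_\infty\le1$ and $\alpha_j=\gamma_j/\|\boldsymbol{\gamma}\|_\infty$ if $\|\boldsymbol{\gamma}\|_\infty>1$; define $\beta=1$ if $\|\boldsymbol{\gamma}\|_\infty\le1$ and $\beta=\|\boldsymbol{\gamma}\|_\infty$ otherwise. Let $r^{(\boldsymbol{\alpha})}$ be the randomized-reflection modification of $r$: $r^{(\boldsymbol{\alpha})}(i,j)=r(i,j)\alpha_j$ for $i\neq j$, $r^{(\boldsymbol{\alpha})}(i,i)=1-\sum_{j\ne i}r(i,j)\alpha_j$. Let $\mathbf{X}^{(\boldsymbol{\gamma})}$ be the continuous-time Markov chain on $\mathbb{N}_0^{\overline{J}}$ whose positive transition rates are $q(\mathbf{n},\mathbf{n}+\mathbf{e}_i)=\beta\lambda r^{(\boldsymbol{\alpha})}(0,i)$ for $i\in\overline{J}$, $q(\mathbf{n},\mathbf{n}-\mathbf{e}_j+\mathbf{e}_i)=1_{[n_j>0]}\gamma_j\mu_j(n_j)r^{(\boldsymbol{\alpha})}(j,i)$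 for $i,j\in\overline{J}$, $i\ne j$, and $q(\mathbf{n},\mathbf{n}-\mathbf{e}_j)=1_{[n_j>0]}\gamma_j\mu_j(n_j)r^{(\boldsymbol{\alpha})}(j,0)$ for $j\in\overline{J}$. Let $B(\boldsymbol{\gamma})=\{j\in\overline{J}:\gamma_j=0\}$ and $W(\boldsymbol{\gamma})=\overline{J}\setminus B(\boldsymbol{\gamma})$. Then $\xi$ is a stationary distribution of $\mathbf{X}^{(\boldsymbol{\gamma})}$. If $B(\boldsymbol{\gamma})=\emptyset$, then $\mathbf{X}^{(\boldsymbol{\gamma})}$ is ergodic. If $B(\boldsymbol{\gamma})\neq\emptyset$, then $\mathbf{X}^{(\boldsymbol{\gamma})}$ is not irreducible on $\mathbb{N}_0^{\overline{J}}$, its state space splits into the infinitely many closed subspaces $\mathbb{N}_0^{W(\boldsymbol{\gamma})}\times\{(n_j:j\in B(\boldsymbol{\gamma}))\}$, and for every probability distribution $\varphi$ on $\mathbb{N}_0^{B(\boldsymbol{\gamma})}$ the distribution \[ \xi^{(\boldsymbol{\gamma})}_\varphi(\mathbf{n})=\prod_{j\in W(\boldsymbol{\gamma})}\prod_{k=1}^{n_j}\frac{\eta_j}{\mu_j(k)}C(j)^{-1}\cdot\varphi(n_j:j\in B(\boldsymbol{\gamma})),\qquad \mathbf{n}\in\mathbb{N}_0^{\overline{J}}, \] is a stationary distribution of $\mathbf{X}^{(\boldsymbol{\gamma})}$.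
   Context: Jackson network setting: node set $\overline{J}=\{1,\dots,J\}$, extended node set $\overline{J}_0=\{0,1,\dots,J\}$ (0 = external source/sink). External Poisson arrivals at node $j$ with rates $\lambda_j\ge0$, $\lambda=\sum_j\lambda_j>0$; single servers with infinite waiting room, FCFS, service intensity $\mu_j(n_j)>0$ when $n_j>0$ customers are at node $j$. Extended routing matrix $r=(r(i,j):i,j\in\overline{J}_0)$ is stochastic and irreducible with $r(0,j)=\lambda_j/\lambda$, $r(0,0)=0$. $\eta=(\eta_j:j\in\overline{J}_0)$ is the extended traffic solution: $\eta_0=\lambda$ and $\eta_j=\sum_{i\in\overline{J}_0}\eta_i r(i,j)$ for all $j\in\overline{J}_0$; reversibility means $\eta_i r(i,j)=\eta_j r(j,i)$. The Jackson network process $\mathbf{X}$ is the Markov chain on $\mathbb{N}_0^{\overline{J}}$ with rates $q(\mathbf{n},\mathbf{n}+\mathbf{e}_i)=\lambda r(0,i)$, $q(\mathbf{n},\mathbf{n}-\mathbf{e}_j+\mathbf{e}_i)=1_{[n_j>0]}\mu_j(n_j)r(j,i)$ ($i\neq j$), $q(\mathbf{n},\mathbf{n}-\mathbf{e}_j)=1_{[n_j>0]}\mu_j(n_j)r(j,0)$; it is assumed ergodic, and $C(j)=\sum_{n\ge0}\prod_{k=1}^n\eta_j/\mu_j(k)<\infty$. $\mathbf{e}_j$ is the $j$-th unit vector. *)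

theory Defs
  imports "HOL-Analysis.Analysis"
begin

text \<open>A state of a network with node set I is a vector of queue lengths indexed by I,
  represented as a function nat \<Rightarrow> nat vanishing outside I.  Thus states I models N_0^I.\<close>

type_synonym state = "nat \<Rightarrow> nat"

definition states :: "nat set \<Rightarrow> state set" where
  "states I = {n. \<forall>k. k \<notin> I \<longrightarrow> n k = 0}"

text \<open>A chain on state space S is given by its off-diagonal transition rates q x y (x \<noteq> y).\<close>

definition qout :: "'a set \<Rightarrow> ('a \<Rightarrow> 'a \<Rightarrow> real) \<Rightarrow> 'a \<Rightarrow> real" where
  "qout S q x = infsum (\<lambda>y. q x y) (S - {x})"

definition prob_dist :: "'a set \<Rightarrow> ('a \<Rightarrow> real) \<Rightarrow> bool" where
  "prob_dist S p \<longleftrightarrow> (\<forall>x\<in>S. 0 \<le> p x) \<and> (p has_sum 1) S"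

definition stationary_dist :: "'a set \<Rightarrow> ('a \<Rightarrow> 'a \<Rightarrow> real) \<Rightarrow> ('a \<Rightarrow> real) \<Rightarrow> bool" where
  "stationary_dist S q p \<longleftrightarrow> prob_dist S p \<and>
     (\<forall>x\<in>S. ((\<lambda>y. p y * q y x) has_sum (p x * qout S q x)) (S - {x}))"

definition trans_rel :: "'a set \<Rightarrow> ('a \<Rightarrow> 'a \<Rightarrow> real) \<Rightarrow> ('a \<times> 'a) set" where
  "trans_rel S q = {(x, y). x \<in> S \<and> y \<in> S \<and> x \<noteq> y \<and> 0 < q x y}"

definition irreducible_chain :: "'a set \<Rightarrow> ('a \<Rightarrow> 'a \<Rightarrow> real) \<Rightarrow> bool" where
  "irreducible_chain S q \<longleftrightarrow> (\<forall>x\<in>S. \<forall>y\<in>S. (x, y) \<in> (trans_rel S q)\<^sup>*)"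

definition closed_subspace :: "'a set \<Rightarrow> ('a \<Rightarrow> 'a \<Rightarrow> real) \<Rightarrow> 'a set \<Rightarrow> bool" where
  "closed_subspace S q C \<longleftrightarrow> C \<subseteq> S \<and> (\<forall>x\<in>C. \<forall>y\<in>S - C. q x y = 0)"

text \<open>Positive recurrence via the embedded jump chain: the chain started in i returns to i
  with probability one, and the expected return time (sum of the mean sojourn times along
  the first-return path) is finite.\<close>

definition jump_prob :: "'a set \<Rightarrow> ('a \<Rightarrow> 'a \<Rightarrow> real) \<Rightarrow> 'a \<Rightarrow> 'a \<Rightarrow> real" where
  "jump_prob S q x y = (if x = y then 0 else q x y / qout S q x)"

definition first_return_paths :: "'a set \<Rightarrow> 'a \<Rightarrow> 'a list set" where
  "first_return_paths S i =
     {xs. xs \<noteq> [] \<and> last xs = i \<and> set xs \<subseteq> S \<and> i \<notin> set (butlast xs)}"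

definition path_prob :: "'a set \<Rightarrow> ('a \<Rightarrow> 'a \<Rightarrow> real) \<Rightarrow> 'a \<Rightarrow> 'a list \<Rightarrow> real" where
  "path_prob S q i xs = prod_list (map (\<lambda>(x, y). jump_prob S q x y) (zip (i # xs) xs))"

definition return_time :: "'a set \<Rightarrow> ('a \<Rightarrow> 'a \<Rightarrow> real) \<Rightarrow> 'a \<Rightarrow> 'a list \<Rightarrow> real" where
  "return_time S q i xs = sum_list (map (\<lambda>x. 1 / qout S q x) (i # butlast xs))"

definition pos_recurrent :: "'a set \<Rightarrow> ('a \<Rightarrow> 'a \<Rightarrow> real) \<Rightarrow> 'a \<Rightarrow> bool" where
  "pos_recurrent S q i \<longleftrightarrow>
     (path_prob S q i has_sum 1) (first_return_paths S i) \<and>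
     (\<lambda>xs. path_prob S q i xs * return_time S q i xs) summable_on first_return_paths S i"

definition ergodic :: "'a set \<Rightarrow> ('a \<Rightarrow> 'a \<Rightarrow> real) \<Rightarrow> bool" where
  "ergodic S q \<longleftrightarrow> irreducible_chain S q \<and> (\<forall>i\<in>S. pos_recurrent S q i)"

text \<open>Rates of a Jackson-type network on nodes 1..J (0 = outside): total external arrival
  rate a, service intensity s j k at node j holding k customers, extended routing rt.\<close>

definition jackson_q ::
  "nat \<Rightarrow> real \<Rightarrow> (nat \<Rightarrow> nat \<Rightarrow> real) \<Rightarrow> (nat \<Rightarrow> nat \<Rightarrow> real) \<Rightarrow> state \<Rightarrow> state \<Rightarrow> real" where
  "jackson_q J a s rt n m =
     (\<Sum>i\<in>{1..J}. if m = n(i := Suc (n i)) then a * rt 0 i else 0) +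
     (\<Sum>j\<in>{1..J}. if 0 < n j then
        (\<Sum>i\<in>{1..J} - {j}. if m = n(j := n j - 1, i := Suc (n i)) then s j (n j) * rt j i else 0)
        + (if m = n(j := n j - 1) then s j (n j) * rt j 0 else 0)
      else 0)"

definition r_alpha :: "nat \<Rightarrow> (nat \<Rightarrow> nat \<Rightarrow> real) \<Rightarrow> (nat \<Rightarrow> real) \<Rightarrow> nat \<Rightarrow> nat \<Rightarrow> real" where
  "r_alpha J r \<alpha> i j =
     (if i \<noteq> j then r i j * \<alpha> j else 1 - (\<Sum>k\<in>{0..J} - {i}. r i k * \<alpha> k))"

definition gnorm :: "nat \<Rightarrow> (nat \<Rightarrow> real) \<Rightarrow> real" where
  "gnorm J \<gamma> = Max (\<gamma> ` {1..J})"

definition alpha :: "nat \<Rightarrow> (nat \<Rightarrow> real) \<Rightarrow> nat \<Rightarrow> real" where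
  "alpha J \<gamma> j = (if j = 0 then 1 else if gnorm J \<gamma> \<le> 1 then \<gamma> j else \<gamma> j / gnorm J \<gamma>)"

definition beta :: "nat \<Rightarrow> (nat \<Rightarrow> real) \<Rightarrow> real" where
  "beta J \<gamma> = (if gnorm J \<gamma> \<le> 1 then 1 else gnorm J \<gamma>)"

definition q_gamma ::
  "nat \<Rightarrow> real \<Rightarrow> (nat \<Rightarrow> nat \<Rightarrow> real) \<Rightarrow> (nat \<Rightarrow> nat \<Rightarrow> real) \<Rightarrow> (nat \<Rightarrow> real) \<Rightarrow> state \<Rightarrow> state \<Rightarrow> real" where
  "q_gamma J lam \<mu> r \<gamma> =
     jackson_q J (beta J \<gamma> * lam) (\<lambda>j k. \<gamma> j * \<mu> j k) (r_alpha J r (alpha J \<gamma>))"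

definition blocked :: "nat \<Rightarrow> (nat \<Rightarrow> real) \<Rightarrow> nat set" where
  "blocked J \<gamma> = {j\<in>{1..J}. \<gamma> j = 0}"

definition working :: "nat \<Rightarrow> (nat \<Rightarrow> real) \<Rightarrow> nat set" where
  "working J \<gamma> = {1..J} - blocked J \<gamma>"

definition normC :: "(nat \<Rightarrow> real) \<Rightarrow> (nat \<Rightarrow> nat \<Rightarrow> real) \<Rightarrow> nat \<Rightarrow> real" where
  "normC \<eta> \<mu> j = (\<Sum>n. \<Prod>k\<in>{1..n}. \<eta> j / \<mu> j k)"

definition marg :: "(nat \<Rightarrow> real) \<Rightarrow> (nat \<Rightarrow> nat \<Rightarrow> real) \<Rightarrow> nat \<Rightarrow> nat \<Rightarrow> real" where
  "marg \<eta> \<mu> j m = (\<Prod>k\<in>{1..m}. \<eta> j / \<mu> j k) / normC \<eta> \<mu> j"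

definition xi :: "nat \<Rightarrow> (nat \<Rightarrow> real) \<Rightarrow> (nat \<Rightarrow> nat \<Rightarrow> real) \<Rightarrow> state \<Rightarrow> real" where
  "xi J \<eta> \<mu> n = (\<Prod>j\<in>{1..J}. marg \<eta> \<mu> j (n j))"

definition restrict_state :: "nat set \<Rightarrow> state \<Rightarrow> state" where
  "restrict_state I n = (\<lambda>j. if j \<in> I then n j else 0)"

definition xi_phi ::
  "nat \<Rightarrow> (nat \<Rightarrow> real) \<Rightarrow> (nat \<Rightarrow> nat \<Rightarrow> real) \<Rightarrow> (nat \<Rightarrow> real) \<Rightarrow> (state \<Rightarrow> real) \<Rightarrow> state \<Rightarrow> real" where
  "xi_phi J \<eta> \<mu> \<gamma> \<phi> n =
     (\<Prod>j\<in>working J \<gamma>. marg \<eta> \<mu> j (n j)) * \<phi> (restrict_state (blocked J \<gamma>) n)"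

definition fiber :: "nat \<Rightarrow> (nat \<Rightarrow> real) \<Rightarrow> state \<Rightarrow> state set" where
  "fiber J \<gamma> b = {n\<in>states {1..J}. \<forall>j\<in>blocked J \<gamma>. n j = b j}"

end

theory Submission
  imports Defs
begin

text \<open>
  The product measure with marginals proportional to \<open>\<Prod>k = 1..n. \<eta> j / \<mu> j k\<close> on the working
  nodes and an arbitrary distribution \<open>\<phi>\<close> on the blocked nodes satisfies detailed balance for
  the modified rates: for an arrival at or a departure from node \<open>i\<close> this is the reversibility
  \<open>\<eta> 0 * r 0 i = \<eta> i * r i 0\<close> scaled by \<open>\<gamma> i\<close>, and a move \<open>j \<rightarrow> i\<close> and its reverse both
  carry the factor \<open>\<gamma> i * \<gamma> j / \<beta>\<close>, leaving \<open>\<eta> j * r j i = \<eta> i * r i j\<close>. As every state has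
  finitely many transitions, detailed balance gives stationarity. Blocked nodes never change
  their queue length, so the fibres are closed and the chain is reducible.

  Without blocked nodes every customer can leave along a routing path to the outside, so all
  states communicate through the empty network. Positive recurrence then follows from a general
  criterion for reversible chains: the invariant measure \<open>\<pi> * qout\<close> of the jump chain
  dominates the occupation measure of the paths from \<open>i\<close> that avoid \<open>i\<close>, which bounds the
  expected return time by \<open>1 / qout i + (\<Sum>x. \<pi> x) / (\<pi> i * qout i)\<close>.
\<close>

section \<open>Nonnegative sums and detailed balance\<close>

lemma has_sum_product_nonneg:
  fixes f :: "'a \<Rightarrow> real" and g :: "'b \<Rightarrow> real"
  assumes f: "(f has_sum a) A" and g: "(g has_sum b) B"
    and "\<And>x. x \<in> A \<Longrightarrow> 0 \<le> f x" and "\<And>y. y \<in> B \<Longrightarrow> 0 \<le> g y"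
  shows "((\<lambda>(x, y). f x * g y) has_sum (a * b)) (A \<times> B)"
proof -
  have rows: "((\<lambda>y. f x * g y) has_sum f x * b) B" for x
    using g by (rule has_sum_cmult_right)
  have cols: "((\<lambda>x. f x * b) has_sum a * b) A"
    using f by (rule has_sum_cmult_left)
  have "(\<lambda>(x, y). f x * g y) summable_on A \<times> B"
    using rows cols assms(3,4)
    by (intro summable_on_SigmaI[where g = "\<lambda>x. f x * b"]) (auto simp: has_sum_imp_summable)
  with rows cols show ?thesis
    by (intro has_sum_SigmaI[where g = "\<lambda>x. f x * b"]) auto
qed

lemma has_sum_UN_disjoint_nonneg:
  fixes f :: "'b \<Rightarrow> real"
  assumes f: "\<And>x. x \<in> A \<Longrightarrow> (f has_sum g x) (B x)" and g: "(g has_sum s) A"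
    and nonneg: "\<And>x y. x \<in> A \<Longrightarrow> y \<in> B x \<Longrightarrow> 0 \<le> f y"
    and disj: "disjoint_family_on B A"
  shows "(f has_sum s) (\<Union>x\<in>A. B x)"
proof -
  have "(f \<circ> snd) summable_on Sigma A B"
    using assms by (intro summable_on_SigmaI[where g = g]) (auto simp: has_sum_imp_summable)
  then have "((f \<circ> snd) has_sum s) (Sigma A B)"
    using f g by (intro has_sum_SigmaI[where g = g]) auto
  moreover have "inj_on snd (Sigma A B)"
    using disj by (force simp: disjoint_family_on_def inj_on_def)
  moreover have "snd ` Sigma A B = (\<Union>x\<in>A. B x)"
    by force
  ultimately show ?thesis
    by (metis has_sum_reindex)
qed

lemma has_sum_prod_states:
  fixes f :: "nat \<Rightarrow> nat \<Rightarrow> real"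
  assumes "finite I"
    and "\<And>j. j \<in> I \<Longrightarrow> (f j has_sum s j) UNIV"
    and "\<And>j k. j \<in> I \<Longrightarrow> 0 \<le> f j k"
  shows "((\<lambda>n. \<Prod>j\<in>I. f j (n j)) has_sum (\<Prod>j\<in>I. s j)) (states I)"
  using assms
proof (induction I rule: finite_induct)
  case empty
  have "states {} = {\<lambda>_. 0}"
    by (auto simp: states_def)
  then show ?case
    by (simp add: has_sum_finiteI)
next
  case (insert a I)
  have "((\<lambda>(k, m). f a k * (\<Prod>j\<in>I. f j (m j))) has_sum (s a * (\<Prod>j\<in>I. s j)))
      (UNIV \<times> states I)"
    using insert by (intro has_sum_product_nonneg[where f = "f a"]) (auto intro: prod_nonneg)
  also have "?this \<longleftrightarrow> ((\<lambda>n. \<Prod>j\<in>insert a I. f j (n j)) has_sum (\<Prod>j\<in>insert a I. s j))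
      (states (insert a I))"
    by (rule has_sum_reindex_bij_witness[where i = "\<lambda>n. (n a, n(a := 0))" and j = "\<lambda>(k, m). m(a := k)"])
      (use insert.hyps in \<open>auto simp: states_def intro!: prod.cong\<close>)
  finally show ?case .
qed

lemma has_sum_qout:
  fixes q :: "'a \<Rightarrow> 'a \<Rightarrow> real"
  assumes "finite {y. q x y \<noteq> 0}"
  shows "(q x has_sum qout S q x) (S - {x})"
    and "qout S q x = sum (q x) {y \<in> S - {x}. q x y \<noteq> 0}"
proof -
  let ?T = "{y \<in> S - {x}. q x y \<noteq> 0}"
  have "finite ?T"
    using assms by (rule rev_finite_subset) auto
  then have "(q x has_sum sum (q x) ?T) ?T"
    by (rule has_sum_finite)
  also have "?this \<longleftrightarrow> (q x has_sum sum (q x) ?T) (S - {x})"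
    by (rule has_sum_cong_neutral) auto
  finally show "(q x has_sum qout S q x) (S - {x})" "qout S q x = sum (q x) ?T"
    by (auto simp: qout_def infsumI)
qed

lemma stationary_dist_if_detailed_balance:
  fixes q :: "'a \<Rightarrow> 'a \<Rightarrow> real"
  assumes "prob_dist S p" and "\<And>x. finite {y. q x y \<noteq> 0}"
    and balance: "\<And>x y. p x * q x y = p y * q y x"
  shows "stationary_dist S q p"
  unfolding stationary_dist_def
proof (intro conjI ballI assms(1))
  fix x
  have "((\<lambda>y. p x * q x y) has_sum (p x * qout S q x)) (S - {x})"
    using assms(2) by (intro has_sum_cmult_right has_sum_qout)
  then show "((\<lambda>y. p y * q y x) has_sum (p x * qout S q x)) (S - {x})"
    using has_sum_cong[of "S - {x}" "\<lambda>y. p x * q x y" "\<lambda>y. p y * q y x"] balance by blast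
qed

section \<open>Positive recurrence of reversible chains\<close>

locale reversible_chain =
  fixes S :: "'a set" and q :: "'a \<Rightarrow> 'a \<Rightarrow> real" and \<pi> :: "'a \<Rightarrow> real"
  assumes rate_nonneg: "\<And>x y. x \<in> S \<Longrightarrow> y \<in> S \<Longrightarrow> x \<noteq> y \<Longrightarrow> 0 \<le> q x y"
    and finite_jumps: "\<And>x. x \<in> S \<Longrightarrow> finite {y\<in>S. y \<noteq> x \<and> q x y \<noteq> 0}"
    and qout_pos: "\<And>x. x \<in> S \<Longrightarrow> 0 < qout S q x"
    and weight_pos: "\<And>x. x \<in> S \<Longrightarrow> 0 < \<pi> x"
    and detailed_balance: "\<And>x y. x \<in> S \<Longrightarrow> y \<in> S \<Longrightarrow> \<pi> x * q x y = \<pi> y * q y x"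
    and summable_flux: "(\<lambda>x. \<pi> x * qout S q x) summable_on S"
    and summable_weight: "\<pi> summable_on S"
begin

abbreviation P :: "'a \<Rightarrow> 'a \<Rightarrow> real" where
  "P \<equiv> jump_prob S q"

definition jump_targets :: "'a \<Rightarrow> 'a set" where
  "jump_targets x = {y\<in>S. y \<noteq> x \<and> q x y \<noteq> 0}"

definition flux :: "'a \<Rightarrow> real" where
  "flux x = \<pi> x * qout S q x"

lemma jump_targets_subset: "jump_targets x \<subseteq> S"
  by (auto simp: jump_targets_def)

lemma finite_jump_targets: "x \<in> S \<Longrightarrow> finite (jump_targets x)"
  using finite_jumps by (simp add: jump_targets_def)

lemma jump_targets_sym:
  assumes "x \<in> S" "y \<in> S"
  shows "y \<in> jump_targets x \<longleftrightarrow> x \<in> jump_targets y"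
proof -
  have "q x y \<noteq> 0 \<longleftrightarrow> q y x \<noteq> 0"
    using detailed_balance[OF assms] weight_pos[OF assms(1)] weight_pos[OF assms(2)] by auto
  then show ?thesis
    using assms by (auto simp: jump_targets_def)
qed

lemma qout_eq_sum_jump_targets: "x \<in> S \<Longrightarrow> qout S q x = sum (q x) (jump_targets x)"
proof -
  assume "x \<in> S"
  have "infsum (q x) (S - {x}) = infsum (q x) (jump_targets x)"
    by (rule infsum_cong_neutral) (auto simp: jump_targets_def)
  then show ?thesis
    using finite_jump_targets[OF \<open>x \<in> S\<close>] by (simp add: qout_def)
qed

lemma qout_nonneg: "x \<in> S \<Longrightarrow> 0 \<le> qout S q x"
  using qout_pos less_imp_le by blast

lemma jump_prob_nonneg: "x \<in> S \<Longrightarrow> y \<in> S \<Longrightarrow> 0 \<le> P x y"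
  using rate_nonneg qout_pos[of x] by (auto simp: jump_prob_def)

lemma jump_prob_eq_0: "x \<in> S \<Longrightarrow> y \<in> S \<Longrightarrow> y \<notin> jump_targets x \<Longrightarrow> P x y = 0"
  by (auto simp: jump_prob_def jump_targets_def)

lemma sum_jump_prob: "x \<in> S \<Longrightarrow> sum (P x) (jump_targets x) = 1"
proof -
  assume "x \<in> S"
  have "sum (P x) (jump_targets x) = sum (q x) (jump_targets x) / qout S q x"
    by (auto simp: jump_prob_def jump_targets_def sum_divide_distrib intro!: sum.cong)
  then show ?thesis
    using qout_pos[OF \<open>x \<in> S\<close>] by (simp add: qout_eq_sum_jump_targets[OF \<open>x \<in> S\<close>])
qed

lemma flux_pos: "x \<in> S \<Longrightarrow> 0 < flux x"
  using weight_pos qout_pos by (simp add: flux_def)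

lemma flux_nonneg: "x \<in> S \<Longrightarrow> 0 \<le> flux x"
  using flux_pos less_imp_le by blast

lemma flux_summable: "flux summable_on S"
  using summable_flux by (simp add: flux_def[abs_def])

lemma flux_balance: "y \<in> S \<Longrightarrow> (\<Sum>x\<in>jump_targets y. P x y * flux x) = flux y"
proof -
  assume y: "y \<in> S"
  have "P x y * flux x = \<pi> x * q x y" if "x \<in> jump_targets y" for x
    using that qout_pos[of x] by (auto simp: jump_prob_def flux_def jump_targets_def)
  then have "(\<Sum>x\<in>jump_targets y. P x y * flux x) = (\<Sum>x\<in>jump_targets y. \<pi> x * q x y)"
    by (intro sum.cong) auto
  also have "\<dots> = (\<Sum>x\<in>jump_targets y. \<pi> y * q y x)"
    using detailed_balance y jump_targets_subset by (intro sum.cong) auto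
  also have "\<dots> = flux y"
    by (simp add: flux_def qout_eq_sum_jump_targets[OF y] sum_distrib_left)
  finally show ?thesis .
qed

end

locale reversible_chain_from = reversible_chain +
  fixes i :: 'a
  assumes i_in_S: "i \<in> S"
begin

abbreviation pp :: "'a list \<Rightarrow> real" where
  "pp \<equiv> path_prob S q i"

text \<open>Paths are lists of visited states after the start \<open>i\<close>, so \<open>endpoint []\<close> is \<open>i\<close>.\<close>

definition endpoint :: "'a list \<Rightarrow> 'a" where
  "endpoint ys = last (i # ys)"

definition extend :: "'a list set \<Rightarrow> 'a list set" where
  "extend A = (\<Union>ys\<in>A. (\<lambda>y. ys @ [y]) ` jump_targets (endpoint ys))"

fun taboo_paths :: "nat \<Rightarrow> 'a list set" where
  "taboo_paths 0 = {[]}"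
| "taboo_paths (Suc n) = {xs \<in> extend (taboo_paths n). last xs \<noteq> i}"

declare taboo_paths.simps(2) [simp del]

definition return_paths :: "nat \<Rightarrow> 'a list set" where
  "return_paths n = {xs \<in> extend (taboo_paths n). last xs = i}"

definition taboo_mass :: "nat \<Rightarrow> 'a \<Rightarrow> real" where
  "taboo_mass n x = sum pp {ys \<in> taboo_paths n. endpoint ys = x}"

definition survival :: "nat \<Rightarrow> real" where
  "survival n = sum pp (taboo_paths n)"

lemma endpoint_Nil [simp]: "endpoint [] = i"
  by (simp add: endpoint_def)

lemma endpoint_snoc [simp]: "endpoint (ys @ [y]) = y"
  by (simp add: endpoint_def)

lemma path_prob_Nil [simp]: "pp [] = 1"
  by (simp add: path_prob_def)

lemma path_prob_snoc: "pp (ys @ [y]) = pp ys * P (endpoint ys) y"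
proof -
  have "zip (b # ys @ [y]) (ys @ [y]) = zip (b # ys) ys @ [(last (b # ys), y)]" for b
    by (induction ys arbitrary: b) auto
  then show ?thesis
    by (simp add: path_prob_def endpoint_def)
qed

lemma path_prob_nonneg: "set ys \<subseteq> S \<Longrightarrow> 0 \<le> pp ys"
proof (induction ys rule: rev_induct)
  case (snoc y ys)
  have "endpoint ys \<in> S"
    using snoc.prems i_in_S by (auto simp: endpoint_def)
  with snoc show ?case
    by (simp add: path_prob_snoc jump_prob_nonneg)
qed simp

lemma taboo_pathsD:
  "ys \<in> taboo_paths n \<Longrightarrow> length ys = n \<and> set ys \<subseteq> S - {i} \<and> endpoint ys \<in> S"
proof (induction n arbitrary: ys)
  case 0
  then show ?case
    using i_in_S by (simp add: endpoint_def)
next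
  case (Suc n)
  then obtain zs y where "zs \<in> taboo_paths n" "y \<in> jump_targets (endpoint zs)" "ys = zs @ [y]" "y \<noteq> i"
    by (auto simp: extend_def taboo_paths.simps(2))
  with Suc.IH[of zs] jump_targets_subset show ?case
    by auto
qed

lemma taboo_paths_SucE:
  assumes "zs \<in> taboo_paths (Suc n)"
  obtains ys y where "zs = ys @ [y]" "ys \<in> taboo_paths n" "y \<in> jump_targets (endpoint ys)" "y \<noteq> i"
  using assms by (auto simp: extend_def taboo_paths.simps(2))

lemma finite_extend: "finite A \<Longrightarrow> (\<And>ys. ys \<in> A \<Longrightarrow> endpoint ys \<in> S) \<Longrightarrow> finite (extend A)"
  using finite_jump_targets by (auto simp: extend_def)

lemma finite_taboo_paths: "finite (taboo_paths n)"
proof (induction n)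
  case (Suc n)
  then have "finite (extend (taboo_paths n))"
    using taboo_pathsD by (blast intro: finite_extend)
  then show ?case
    by (simp add: taboo_paths.simps(2))
qed simp

lemma finite_extend_taboo_paths: "finite (extend (taboo_paths n))"
  using finite_taboo_paths taboo_pathsD by (blast intro: finite_extend)

lemma finite_return_paths: "finite (return_paths n)"
  using finite_extend_taboo_paths by (simp add: return_paths_def)

lemma extend_taboo_paths_split:
  "extend (taboo_paths n) = taboo_paths (Suc n) \<union> return_paths n"
  "taboo_paths (Suc n) \<inter> return_paths n = {}"
  by (auto simp: return_paths_def taboo_paths.simps(2))

lemma sum_extend_taboo_paths:
  "(\<Sum>zs\<in>extend (taboo_paths n). pp zs * h (butlast zs)) = (\<Sum>ys\<in>taboo_paths n. pp ys * h ys)"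
proof -
  have "(\<Sum>zs\<in>extend (taboo_paths n). pp zs * h (butlast zs))
      = (\<Sum>ys\<in>taboo_paths n. \<Sum>zs\<in>(\<lambda>y. ys @ [y]) ` jump_targets (endpoint ys). pp zs * h (butlast zs))"
    unfolding extend_def using finite_taboo_paths taboo_pathsD finite_jump_targets
    by (intro sum.UNION_disjoint) auto
  also have "\<dots> = (\<Sum>ys\<in>taboo_paths n. pp ys * h ys * sum (P (endpoint ys)) (jump_targets (endpoint ys)))"
    by (intro sum.cong refl, subst sum.reindex)
      (auto simp: inj_on_def path_prob_snoc sum_distrib_left mult_ac)
  also have "\<dots> = (\<Sum>ys\<in>taboo_paths n. pp ys * h ys)"
    using taboo_pathsD sum_jump_prob by (intro sum.cong) auto
  finally show ?thesis .
qed

lemma survival_Suc: "survival n = survival (Suc n) + sum pp (return_paths n)"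
proof -
  have "survival n = sum pp (extend (taboo_paths n))"
    using sum_extend_taboo_paths[where h = "\<lambda>_. 1"] by (simp add: survival_def)
  also have "\<dots> = survival (Suc n) + sum pp (return_paths n)"
    unfolding extend_taboo_paths_split(1) survival_def
    by (rule sum.union_disjoint[OF finite_taboo_paths finite_return_paths extend_taboo_paths_split(2)])
  finally show ?thesis .
qed

lemma taboo_mass_0: "taboo_mass 0 x = (if x = i then 1 else 0)"
  by (simp add: taboo_mass_def endpoint_def)

lemma taboo_mass_Suc_start: "taboo_mass (Suc n) i = 0"
proof -
  have "{ys \<in> taboo_paths (Suc n). endpoint ys = i} = {}"
    by (auto elim!: taboo_paths_SucE)
  then show ?thesis
    by (simp only: taboo_mass_def sum.empty)
qed

lemma sum_group_endpoint:
  assumes "finite A" "finite T" "endpoint ` A \<subseteq> T"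
  shows "(\<Sum>ys\<in>A. pp ys * c (endpoint ys)) = (\<Sum>x\<in>T. sum pp {ys\<in>A. endpoint ys = x} * c x)"
proof -
  have "(\<Sum>ys\<in>A. pp ys * c (endpoint ys))
      = (\<Sum>x\<in>T. \<Sum>ys\<in>{ys\<in>A. endpoint ys = x}. pp ys * c (endpoint ys))"
    using assms by (intro sum.group[symmetric]) auto
  also have "\<dots> = (\<Sum>x\<in>T. sum pp {ys\<in>A. endpoint ys = x} * c x)"
    by (auto simp: sum_distrib_right intro!: sum.cong)
  finally show ?thesis .
qed

lemma taboo_mass_Suc:
  assumes y: "y \<in> S" "y \<noteq> i"
  shows "taboo_mass (Suc n) y = (\<Sum>x\<in>jump_targets y. taboo_mass n x * P x y)"
proof -
  let ?A = "{ys \<in> taboo_paths n. endpoint ys \<in> jump_targets y}"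
  have paths: "{zs \<in> taboo_paths (Suc n). endpoint zs = y} = (\<lambda>ys. ys @ [y]) ` ?A"
  proof (intro equalityI subsetI)
    fix zs assume "zs \<in> {zs \<in> taboo_paths (Suc n). endpoint zs = y}"
    then obtain ys where "zs = ys @ [y]" "ys \<in> taboo_paths n" "y \<in> jump_targets (endpoint ys)"
      by (auto elim!: taboo_paths_SucE)
    then show "zs \<in> (\<lambda>ys. ys @ [y]) ` ?A"
      using jump_targets_sym[OF _ y(1)] taboo_pathsD by blast
  next
    fix zs assume "zs \<in> (\<lambda>ys. ys @ [y]) ` ?A"
    then obtain ys where "zs = ys @ [y]" "ys \<in> taboo_paths n" "endpoint ys \<in> jump_targets y"
      by blast
    moreover have "y \<in> jump_targets (endpoint ys)"
      using jump_targets_sym[OF _ y(1)] jump_targets_subset \<open>endpoint ys \<in> jump_targets y\<close> by blast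
    ultimately show "zs \<in> {zs \<in> taboo_paths (Suc n). endpoint zs = y}"
      using y by (force simp: extend_def taboo_paths.simps(2))
  qed
  have "taboo_mass (Suc n) y = (\<Sum>ys\<in>?A. pp ys * P (endpoint ys) y)"
    unfolding taboo_mass_def paths by (subst sum.reindex) (auto simp: inj_on_def path_prob_snoc)
  also have "\<dots> = (\<Sum>x\<in>jump_targets y. sum pp {ys\<in>?A. endpoint ys = x} * P x y)"
    using finite_taboo_paths finite_jump_targets[OF y(1)] by (intro sum_group_endpoint) auto
  also have "\<dots> = (\<Sum>x\<in>jump_targets y. taboo_mass n x * P x y)"
    unfolding taboo_mass_def by (intro sum.cong refl arg_cong2[where f = "(*)"]) auto
  finally show ?thesis .
qed

lemma taboo_mass_le_flux: "x \<in> S \<Longrightarrow> flux i * (\<Sum>n\<le>N. taboo_mass n x) \<le> flux x"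
proof (induction N arbitrary: x)
  case 0
  then show ?case
    using flux_pos by (auto simp: taboo_mass_0 less_imp_le)
next
  case (Suc N)
  have split: "(\<Sum>n\<le>Suc N. taboo_mass n x) = taboo_mass 0 x + (\<Sum>n\<le>N. taboo_mass (Suc n) x)"
    by (subst sum.atMost_Suc_shift) simp
  show ?case
  proof (cases "x = i")
    case True
    then show ?thesis
      unfolding split by (simp add: taboo_mass_0 taboo_mass_Suc_start)
  next
    case False
    have "flux i * (\<Sum>n\<le>Suc N. taboo_mass n x)
        = (\<Sum>z\<in>jump_targets x. P z x * (flux i * (\<Sum>n\<le>N. taboo_mass n z)))"
      unfolding split using False Suc.prems
      by (simp add: taboo_mass_0 taboo_mass_Suc sum_distrib_left sum.swap[of _ _ "{..N}"]
          mult_ac)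
    also have "\<dots> \<le> (\<Sum>z\<in>jump_targets x. P z x * flux z)"
      using Suc jump_targets_subset
      by (intro sum_mono mult_left_mono) (auto intro: jump_prob_nonneg)
    also have "\<dots> = flux x"
      using flux_balance Suc.prems by blast
    finally show ?thesis .
  qed
qed

lemma taboo_occupation_le:
  assumes c: "\<And>x. x \<in> S \<Longrightarrow> 0 \<le> c x" and summable: "(\<lambda>x. flux x * c x) summable_on S"
  shows "(\<Sum>n\<le>N. \<Sum>ys\<in>taboo_paths n. pp ys * c (endpoint ys))
    \<le> infsum (\<lambda>x. flux x * c x) S / flux i"
proof -
  define T where "T = (\<Union>n\<le>N. endpoint ` taboo_paths n)"
  have T: "finite T" "T \<subseteq> S"
    using finite_taboo_paths taboo_pathsD by (auto simp: T_def)
  have "(\<Sum>n\<le>N. \<Sum>ys\<in>taboo_paths n. pp ys * c (endpoint ys))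
      = (\<Sum>n\<le>N. \<Sum>x\<in>T. taboo_mass n x * c x)"
    using T finite_taboo_paths unfolding taboo_mass_def
    by (intro sum.cong refl sum_group_endpoint) (auto simp: T_def)
  also have "\<dots> = (\<Sum>x\<in>T. (\<Sum>n\<le>N. taboo_mass n x) * c x)"
    by (subst sum.swap) (simp add: sum_distrib_right)
  also have "\<dots> \<le> (\<Sum>x\<in>T. flux x / flux i * c x)"
    using T c taboo_mass_le_flux flux_pos[OF i_in_S]
    by (intro sum_mono mult_right_mono) (auto simp: pos_le_divide_eq mult.commute)
  also have "\<dots> = (\<Sum>x\<in>T. flux x * c x) / flux i"
    by (simp add: sum_divide_distrib)
  also have "\<dots> \<le> infsum (\<lambda>x. flux x * c x) S / flux i"
    using T c summable flux_pos[OF i_in_S]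
    by (intro divide_right_mono finite_sum_le_infsum) (auto intro!: mult_nonneg_nonneg flux_nonneg)
  finally show ?thesis .
qed

lemma survival_nonneg: "0 \<le> survival n"
  unfolding survival_def using taboo_pathsD by (intro sum_nonneg path_prob_nonneg) auto

lemma survival_tendsto_0: "survival \<longlonglongrightarrow> 0"
proof -
  have "(\<Sum>n\<le>N. survival n) \<le> infsum flux S / flux i" for N
    using taboo_occupation_le[where c = "\<lambda>_. 1"] flux_summable by (simp add: survival_def)
  then have "summable survival"
    using survival_nonneg by (intro bounded_imp_summable)
  then show ?thesis
    by (rule summable_LIMSEQ_zero)
qed

lemma sum_return_paths: "(\<Sum>n<N. sum pp (return_paths n)) = 1 - survival N"
proof (induction N)
  case (Suc N)
  then show ?case
    using survival_Suc[of N] by simp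
qed (simp add: survival_def)

lemma return_paths_subset: "return_paths n \<subseteq> first_return_paths S i"
proof
  fix xs assume "xs \<in> return_paths n"
  then obtain ys where "xs = ys @ [i]" "ys \<in> taboo_paths n"
    by (auto simp: return_paths_def extend_def)
  then show "xs \<in> first_return_paths S i"
    using taboo_pathsD[of ys n] i_in_S by (auto simp: first_return_paths_def)
qed

lemma return_paths_nonneg: "xs \<in> return_paths n \<Longrightarrow> 0 \<le> pp xs"
  using return_paths_subset by (intro path_prob_nonneg) (auto simp: first_return_paths_def)

lemma length_return_paths: "xs \<in> return_paths n \<Longrightarrow> length xs = Suc n"
  using taboo_pathsD by (auto simp: return_paths_def extend_def)

lemma disjoint_return_paths: "disjoint_family return_paths"
  by (auto simp: disjoint_family_on_def dest!: length_return_paths)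

lemma taboo_pathsI: "set ys \<subseteq> S - {i} \<Longrightarrow> pp ys \<noteq> 0 \<Longrightarrow> ys \<in> taboo_paths (length ys)"
proof (induction ys rule: rev_induct)
  case (snoc y ys)
  then have nonzero: "pp ys \<noteq> 0" "P (endpoint ys) y \<noteq> 0"
    by (auto simp: path_prob_snoc)
  with snoc have ys: "ys \<in> taboo_paths (length ys)"
    by auto
  have "y \<in> jump_targets (endpoint ys)"
    using nonzero(2) jump_prob_eq_0[of "endpoint ys" y] taboo_pathsD[OF ys] snoc.prems
    by auto
  with ys snoc.prems show ?case
    by (auto simp: taboo_paths.simps(2) extend_def)
qed simp

lemma first_return_paths_in_return_paths:
  assumes "xs \<in> first_return_paths S i" "pp xs \<noteq> 0"
  shows "xs \<in> return_paths (length xs - 1)"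
proof -
  define ys where "ys = butlast xs"
  have xs: "xs = ys @ [i]"
    using assms(1) append_butlast_last_id[of xs] by (simp add: ys_def first_return_paths_def)
  have ys: "set ys \<subseteq> S - {i}"
    using assms(1) by (auto simp: ys_def first_return_paths_def dest: in_set_butlastD)
  then have "ys \<in> taboo_paths (length ys)"
    using assms(2) xs ys by (intro taboo_pathsI) (auto simp: path_prob_snoc)
  moreover have "i \<in> jump_targets (endpoint ys)"
    using assms(2) xs i_in_S taboo_pathsD[OF \<open>ys \<in> taboo_paths (length ys)\<close>]
      jump_prob_eq_0[of "endpoint ys" i] by (auto simp: path_prob_snoc)
  ultimately show ?thesis
    using xs by (auto simp: return_paths_def extend_def)
qed

lemma has_sum_return_paths_iff:
  assumes "\<And>xs. pp xs = 0 \<Longrightarrow> f xs = 0"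
  shows "(f has_sum s) (\<Union>n. return_paths n) \<longleftrightarrow> (f has_sum s) (first_return_paths S i)"
  using assms return_paths_subset first_return_paths_in_return_paths
  by (intro has_sum_cong_neutral) blast+

lemma return_prob: "(pp has_sum 1) (first_return_paths S i)"
proof -
  have "(\<lambda>n. sum pp (return_paths n)) sums 1"
    using survival_tendsto_0 unfolding sums_def sum_return_paths
    by (auto intro: tendsto_eq_intros)
  then have "((\<lambda>n. sum pp (return_paths n)) has_sum 1) UNIV"
    using return_paths_nonneg by (intro sums_nonneg_imp_has_sum sum_nonneg)
  then have "(pp has_sum 1) (\<Union>n. return_paths n)"
    using finite_return_paths return_paths_nonneg disjoint_return_paths
    by (intro has_sum_UN_disjoint_nonneg) auto
  then show ?thesis
    by (simp add: has_sum_return_paths_iff)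
qed

definition sojourn :: "'a list \<Rightarrow> real" where
  "sojourn ys = sum_list (map (\<lambda>x. 1 / qout S q x) (i # ys))"

definition taboo_time :: "nat \<Rightarrow> real" where
  "taboo_time n = (\<Sum>ys\<in>taboo_paths n. pp ys * sojourn ys)"

definition holding_time :: "nat \<Rightarrow> real" where
  "holding_time n = (\<Sum>ys\<in>taboo_paths n. pp ys * (1 / qout S q (endpoint ys)))"

lemma return_time_eq_sojourn: "return_time S q i xs = sojourn (butlast xs)"
  by (simp add: return_time_def sojourn_def)

lemma sojourn_snoc: "sojourn (ys @ [y]) = sojourn ys + 1 / qout S q y"
  by (simp add: sojourn_def)

lemma sojourn_nonneg: "set ys \<subseteq> S \<Longrightarrow> 0 \<le> sojourn ys"
  unfolding sojourn_def using qout_nonneg i_in_S by (intro sum_list_nonneg) auto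

lemma return_time_nonneg:
  assumes "xs \<in> return_paths n"
  shows "0 \<le> pp xs * return_time S q i xs"
proof -
  have "xs \<in> first_return_paths S i"
    using assms return_paths_subset by blast
  then have "set (butlast xs) \<subseteq> S"
    by (auto simp: first_return_paths_def dest: in_set_butlastD)
  then show ?thesis
    using return_paths_nonneg[OF assms] by (simp add: return_time_eq_sojourn sojourn_nonneg)
qed

lemma return_time_mass_eq:
  "(\<Sum>xs\<in>return_paths n. pp xs * return_time S q i xs)
    = taboo_time n - taboo_time (Suc n) + holding_time (Suc n)"
proof -
  have "(\<Sum>zs\<in>taboo_paths (Suc n). pp zs * sojourn (butlast zs))
      = (\<Sum>zs\<in>taboo_paths (Suc n). pp zs * sojourn zs - pp zs * (1 / qout S q (endpoint zs)))"
    by (intro sum.cong refl) (auto simp: sojourn_snoc algebra_simps elim!: taboo_paths_SucE)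
  then have "(\<Sum>zs\<in>taboo_paths (Suc n). pp zs * sojourn (butlast zs))
      = taboo_time (Suc n) - holding_time (Suc n)"
    by (simp add: taboo_time_def holding_time_def sum_subtractf)
  moreover have "taboo_time n = (\<Sum>zs\<in>extend (taboo_paths n). pp zs * sojourn (butlast zs))"
    by (simp add: taboo_time_def sum_extend_taboo_paths)
  moreover have "\<dots> = (\<Sum>zs\<in>taboo_paths (Suc n). pp zs * sojourn (butlast zs))
      + (\<Sum>xs\<in>return_paths n. pp xs * return_time S q i xs)"
    unfolding extend_taboo_paths_split(1) return_time_eq_sojourn
    by (rule sum.union_disjoint[OF finite_taboo_paths finite_return_paths extend_taboo_paths_split(2)])
  ultimately show ?thesis
    by simp
qed

lemma sum_return_time_mass_le:
  "(\<Sum>n<N. \<Sum>xs\<in>return_paths n. pp xs * return_time S q i xs)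
    \<le> 1 / qout S q i + infsum \<pi> S / flux i"
proof -
  have flux_div: "flux x * (1 / qout S q x) = \<pi> x" if "x \<in> S" for x
    using qout_pos[OF that] by (simp add: flux_def)
  have "(\<Sum>n\<le>N. holding_time n) = holding_time 0 + (\<Sum>n<N. holding_time (Suc n))"
    by (simp only: lessThan_Suc_atMost[symmetric] sum.lessThan_Suc_shift)
  moreover have "0 \<le> holding_time 0"
    using qout_nonneg[OF i_in_S] by (simp add: holding_time_def)
  ultimately have "(\<Sum>n<N. holding_time (Suc n)) \<le> (\<Sum>n\<le>N. holding_time n)"
    by simp
  also have "\<dots> \<le> infsum (\<lambda>x. flux x * (1 / qout S q x)) S / flux i"
    unfolding holding_time_def
  proof (rule taboo_occupation_le)
    show "(\<lambda>x. flux x * (1 / qout S q x)) summable_on S"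
      by (rule summable_on_cong[THEN iffD2, OF flux_div summable_weight])
  qed (simp add: qout_nonneg)
  also have "\<dots> = infsum \<pi> S / flux i"
    by (simp only: infsum_cong[OF flux_div])
  finally have "(\<Sum>n<N. holding_time (Suc n)) \<le> infsum \<pi> S / flux i" .
  moreover have "0 \<le> taboo_time N"
    unfolding taboo_time_def using taboo_pathsD
    by (intro sum_nonneg mult_nonneg_nonneg path_prob_nonneg sojourn_nonneg) auto
  moreover have "taboo_time 0 = 1 / qout S q i"
    by (simp add: taboo_time_def sojourn_def)
  moreover have "(\<Sum>n<N. taboo_time n - taboo_time (Suc n)) = taboo_time 0 - taboo_time N"
    by (rule sum_lessThan_telescope')
  moreover have "(\<Sum>n<N. \<Sum>xs\<in>return_paths n. pp xs * return_time S q i xs)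
      = (\<Sum>n<N. taboo_time n - taboo_time (Suc n)) + (\<Sum>n<N. holding_time (Suc n))"
    by (simp only: return_time_mass_eq sum.distrib)
  ultimately show ?thesis
    by linarith
qed

lemma return_time_summable:
  "(\<lambda>xs. pp xs * return_time S q i xs) summable_on first_return_paths S i"
proof -
  let ?u = "\<lambda>n. \<Sum>xs\<in>return_paths n. pp xs * return_time S q i xs"
  have "(\<Sum>n\<le>N. ?u n) \<le> 1 / qout S q i + infsum \<pi> S / flux i" for N
    using sum_return_time_mass_le[of "Suc N"] by (simp only: lessThan_Suc_atMost)
  then have "summable ?u"
    using return_time_nonneg by (intro bounded_imp_summable sum_nonneg) auto
  then have "?u summable_on UNIV"
    using return_time_nonneg by (intro summable_nonneg_imp_summable_on sum_nonneg) auto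
  then have "(\<lambda>xs. pp xs * return_time S q i xs) summable_on (\<Union>n. return_paths n)"
    using finite_return_paths return_time_nonneg disjoint_return_paths
    by (intro summable_on_UnionI[where g = ?u]) auto
  then show ?thesis
    using has_sum_return_paths_iff[of "\<lambda>xs. pp xs * return_time S q i xs"]
    unfolding summable_on_def by simp
qed

lemma pos_recurrent: "pos_recurrent S q i"
  using return_prob return_time_summable by (simp add: pos_recurrent_def)

end

lemma (in reversible_chain) pos_recurrent_everywhere: "\<forall>i\<in>S. pos_recurrent S q i"
proof
  fix i assume "i \<in> S"
  then interpret reversible_chain_from S q \<pi> i
    by unfold_locales
  show "pos_recurrent S q i"
    by (rule pos_recurrent)
qed

section \<open>Transitions of Jackson networks\<close>

definition arrive :: "nat \<Rightarrow> state \<Rightarrow> state" where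
  "arrive i n = n(i := Suc (n i))"

definition move :: "nat \<Rightarrow> nat \<Rightarrow> state \<Rightarrow> state" where
  "move j i n = n(j := n j - 1, i := Suc (n i))"

definition depart :: "nat \<Rightarrow> state \<Rightarrow> state" where
  "depart j n = n(j := n j - 1)"

lemma jackson_q_eq:
  "jackson_q J a s rt n m =
     (\<Sum>i\<in>{1..J}. if m = arrive i n then a * rt 0 i else 0) +
     (\<Sum>j\<in>{1..J}. if 0 < n j then
        (\<Sum>i\<in>{1..J} - {j}. if m = move j i n then s j (n j) * rt j i else 0)
        + (if m = depart j n then s j (n j) * rt j 0 else 0)
      else 0)"
  unfolding jackson_q_def arrive_def move_def depart_def ..

lemma arrive_eq_arrive_iff: "arrive i n = arrive i' n \<longleftrightarrow> i = i'"
proof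
  assume "arrive i n = arrive i' n"
  from fun_cong[OF this, of i] show "i = i'"
    by (auto simp: arrive_def split: if_splits)
qed simp

lemma arrive_ne_move: "0 < n j \<Longrightarrow> i' \<noteq> j \<Longrightarrow> arrive i n \<noteq> move j i' n"
proof
  assume "0 < n j" "i' \<noteq> j" "arrive i n = move j i' n"
  from fun_cong[OF this(3), of j] this(1,2) show False
    by (auto simp: arrive_def move_def split: if_splits)
qed

lemma arrive_ne_depart: "0 < n j \<Longrightarrow> arrive i n \<noteq> depart j n"
proof
  assume "0 < n j" "arrive i n = depart j n"
  from fun_cong[OF this(2), of j] this(1) show False
    by (auto simp: arrive_def depart_def split: if_splits)
qed

lemma move_eq_move_iff:
  assumes "0 < n j" "0 < n j'" "i \<noteq> j" "i' \<noteq> j'"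
  shows "move j i n = move j' i' n \<longleftrightarrow> j = j' \<and> i = i'"
proof
  assume eq: "move j i n = move j' i' n"
  show "j = j' \<and> i = i'"
  proof (intro conjI; rule ccontr)
    assume "j \<noteq> j'"
    with fun_cong[OF eq, of j] assms show False
      by (auto simp: move_def split: if_splits)
  next
    assume "i \<noteq> i'"
    with fun_cong[OF eq, of i] fun_cong[OF eq, of j] assms show False
      by (auto simp: move_def split: if_splits)
  qed
qed simp

lemma move_ne_depart: "0 < n j \<Longrightarrow> i \<noteq> j \<Longrightarrow> move j i n \<noteq> depart j' n"
proof
  assume "0 < n j" "i \<noteq> j" "move j i n = depart j' n"
  from fun_cong[OF this(3), of i] this(1,2) show False
    by (auto simp: move_def depart_def split: if_splits)
qed

lemma depart_eq_depart_iff: "0 < n j \<Longrightarrow> depart j n = depart j' n \<longleftrightarrow> j = j'"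
proof
  assume "0 < n j" "depart j n = depart j' n"
  from fun_cong[OF this(2), of j] this(1) show "j = j'"
    by (auto simp: depart_def split: if_splits)
qed simp

lemma jackson_q_arrive:
  assumes "i \<in> {1..J}"
  shows "jackson_q J a s rt n (arrive i n) = a * rt 0 i"
proof -
  have "(\<Sum>j\<in>{1..J}. if 0 < n j then
        (\<Sum>i'\<in>{1..J} - {j}. if arrive i n = move j i' n then s j (n j) * rt j i' else 0)
        + (if arrive i n = depart j n then s j (n j) * rt j 0 else 0) else 0) = 0"
    by (auto simp: arrive_ne_move arrive_ne_depart intro!: sum.neutral)
  with assms show ?thesis
    by (simp add: jackson_q_eq arrive_eq_arrive_iff)
qed

lemma sum_if_pos_eq_single:
  assumes "finite A" "j \<in> A" "0 < n j"
    and "\<And>j'. j' \<in> A \<Longrightarrow> 0 < n j' \<Longrightarrow> f j' = (if j' = j then v else 0)"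
  shows "(\<Sum>j'\<in>A. if 0 < (n j' :: nat) then f j' else 0) = v"
proof -
  have "(\<Sum>j'\<in>A. if 0 < n j' then f j' else 0) = (\<Sum>j'\<in>A. if j' = j then v else 0)"
    using assms by (intro sum.cong) auto
  with assms show ?thesis
    by simp
qed

lemma jackson_q_move:
  assumes "i \<in> {1..J}" "j \<in> {1..J}" "i \<noteq> j" "0 < n j"
  shows "jackson_q J a s rt n (move j i n) = s j (n j) * rt j i"
proof -
  have "(\<Sum>i'\<in>{1..J} - {j'}. if move j i n = move j' i' n then s j' (n j') * rt j' i' else 0)
      + (if move j i n = depart j' n then s j' (n j') * rt j' 0 else 0)
      = (if j' = j then s j (n j) * rt j i else 0)" if "j' \<in> {1..J}" "0 < n j'" for j'
  proof -
    have "(\<Sum>i'\<in>{1..J} - {j'}. if move j i n = move j' i' n then s j' (n j') * rt j' i' else 0)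
        = (\<Sum>i'\<in>{1..J} - {j'}. if j' = j \<and> i' = i then s j (n j) * rt j i else 0)"
      using assms that by (intro sum.cong) (auto simp: move_eq_move_iff)
    then show ?thesis
      using assms by (simp add: sum.delta' move_ne_depart)
  qed
  then have "(\<Sum>j'\<in>{1..J}. if 0 < n j' then
        (\<Sum>i'\<in>{1..J} - {j'}. if move j i n = move j' i' n then s j' (n j') * rt j' i' else 0)
        + (if move j i n = depart j' n then s j' (n j') * rt j' 0 else 0) else 0)
      = s j (n j) * rt j i"
    using assms by (intro sum_if_pos_eq_single) auto
  with assms show ?thesis
    by (simp add: jackson_q_eq arrive_ne_move[symmetric])
qed

lemma jackson_q_depart:
  assumes "j \<in> {1..J}" "0 < n j"
  shows "jackson_q J a s rt n (depart j n) = s j (n j) * rt j 0"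
proof -
  have "(\<Sum>j'\<in>{1..J}. if 0 < n j' then
        (\<Sum>i\<in>{1..J} - {j'}. if depart j n = move j' i n then s j' (n j') * rt j' i else 0)
        + (if depart j n = depart j' n then s j' (n j') * rt j' 0 else 0) else 0)
      = s j (n j) * rt j 0"
    using assms
    by (intro sum_if_pos_eq_single)
      (auto simp: move_ne_depart[symmetric] depart_eq_depart_iff intro!: sum.neutral)
  with assms show ?thesis
    by (simp add: jackson_q_eq arrive_ne_depart[symmetric])
qed

lemma jackson_q_cases:
  assumes "jackson_q J a s rt n m \<noteq> 0"
  obtains (arrival) i where "i \<in> {1..J}" "m = arrive i n"
  | (transfer) j i where "j \<in> {1..J}" "i \<in> {1..J}" "i \<noteq> j" "0 < n j" "m = move j i n"
  | (departure) j where "j \<in> {1..J}" "0 < n j" "m = depart j n"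
proof (rule ccontr)
  assume none: "\<not> thesis"
  have "(if m = arrive i n then a * rt 0 i else 0) = 0" if "i \<in> {1..J}" for i
    using none that arrival by auto
  moreover have "(if m = move j i n then s j (n j) * rt j i else 0) = 0"
    if "j \<in> {1..J}" "0 < n j" "i \<in> {1..J} - {j}" for i j
    using none that transfer by auto
  moreover have "(if m = depart j n then s j (n j) * rt j 0 else 0) = 0"
    if "j \<in> {1..J}" "0 < n j" for j
    using none that departure by auto
  ultimately have "jackson_q J a s rt n m = 0"
    unfolding jackson_q_eq by (simp add: sum.neutral)
  with assms show False
    by simp
qed

lemma jackson_q_nonneg:
  assumes "0 \<le> a" "\<And>j k. j \<in> {1..J} \<Longrightarrow> 0 < k \<Longrightarrow> 0 \<le> s j k"
    and "\<And>j i. j \<in> {0..J} \<Longrightarrow> i \<in> {0..J} \<Longrightarrow> i \<noteq> j \<Longrightarrow> 0 \<le> rt j i"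
  shows "0 \<le> jackson_q J a s rt n m"
proof (cases "jackson_q J a s rt n m = 0")
  case False
  then show ?thesis
  proof (cases rule: jackson_q_cases)
    case (arrival i)
    then show ?thesis
      using assms by (simp add: jackson_q_arrive)
  next
    case (transfer j i)
    then show ?thesis
      using assms by (simp add: jackson_q_move)
  next
    case (departure j)
    then show ?thesis
      using assms by (simp add: jackson_q_depart)
  qed
qed simp

lemma jackson_q_support:
  "{m. jackson_q J a s rt n m \<noteq> 0} \<subseteq> (\<lambda>i. arrive i n) ` {1..J}
     \<union> (\<lambda>(j, i). move j i n) ` ({1..J} \<times> {1..J}) \<union> (\<lambda>j. depart j n) ` {1..J}"
  by (force elim: jackson_q_cases)

lemma finite_jackson_q_support: "finite {m. jackson_q J a s rt n m \<noteq> 0}"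
  by (rule finite_subset[OF jackson_q_support]) auto

lemma card_jackson_q_support: "card {m. jackson_q J a s rt n m \<noteq> 0} \<le> J + J * J + J"
proof -
  let ?A = "(\<lambda>i. arrive i n) ` {1..J}" and ?M = "(\<lambda>(j, i). move j i n) ` ({1..J} \<times> {1..J})"
    and ?D = "(\<lambda>j. depart j n) ` {1..J}"
  have "card {m. jackson_q J a s rt n m \<noteq> 0} \<le> card (?A \<union> ?M \<union> ?D)"
    by (intro card_mono jackson_q_support) auto
  also have "\<dots> \<le> card ?A + card ?M + card ?D"
    using card_Un_le[of "?A \<union> ?M" ?D] card_Un_le[of ?A ?M] by linarith
  also have "\<dots> \<le> J + J * J + J"
    using card_image_le[of "{1..J}"] card_image_le[of "{1..J} \<times> {1..J}"]
    by (intro add_mono) (simp_all add: card_cartesian_product)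
  finally show ?thesis .
qed

section \<open>The modified network\<close>

locale modified_jackson_network =
  fixes J :: nat and \<Lambda> :: real and \<mu> :: "nat \<Rightarrow> nat \<Rightarrow> real" and r :: "nat \<Rightarrow> nat \<Rightarrow> real"
    and \<eta> :: "nat \<Rightarrow> real" and \<gamma> :: "nat \<Rightarrow> real"
  assumes lam_pos: "0 < \<Lambda>"
    and mu_pos: "\<forall>j\<in>{1..J}. \<forall>k\<ge>1. 0 < \<mu> j k"
    and r_nonneg: "\<forall>i\<in>{0..J}. \<forall>j\<in>{0..J}. 0 \<le> r i j"
    and r_stoch: "\<forall>i\<in>{0..J}. (\<Sum>j\<in>{0..J}. r i j) = 1"
    and r_irred: "\<forall>i\<in>{0..J}. \<forall>j\<in>{0..J}.
                    (i, j) \<in> {(a, b). a \<in> {0..J} \<and> b \<in> {0..J} \<and> 0 < r a b}\<^sup>*"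
    and r_00: "r 0 0 = 0"
    and eta_0: "\<eta> 0 = \<Lambda>"
    and reversible: "\<forall>i\<in>{0..J}. \<forall>j\<in>{0..J}. \<eta> i * r i j = \<eta> j * r j i"
    and C_finite: "\<forall>j\<in>{1..J}. summable (\<lambda>n. \<Prod>k\<in>{1..n}. \<eta> j / \<mu> j k)"
    and gamma_nonneg: "\<forall>j\<in>{1..J}. 0 \<le> \<gamma> j"
begin

abbreviation "S \<equiv> states {1..J}"
abbreviation "B \<equiv> blocked J \<gamma>"
abbreviation "W \<equiv> working J \<gamma>"
abbreviation "\<alpha> \<equiv> alpha J \<gamma>"
abbreviation "\<beta> \<equiv> beta J \<gamma>"
abbreviation "Q \<equiv> q_gamma J \<Lambda> \<mu> r \<gamma>"

lemma mu_pos': "j \<in> {1..J} \<Longrightarrow> 0 < k \<Longrightarrow> 0 < \<mu> j k"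
  using mu_pos by auto

lemma beta_pos: "0 < \<beta>"
  by (simp add: beta_def)

lemma alpha_eq: "j \<in> {1..J} \<Longrightarrow> \<alpha> j = \<gamma> j / \<beta>"
  by (auto simp: alpha_def beta_def)

lemma alpha_bounds: "j \<in> {0..J} \<Longrightarrow> 0 \<le> \<alpha> j \<and> \<alpha> j \<le> 1"
proof (cases "j = 0")
  case False
  assume "j \<in> {0..J}"
  with False have j: "j \<in> {1..J}"
    by auto
  have "\<gamma> j \<le> gnorm J \<gamma>"
    unfolding gnorm_def using j by (intro Max_ge) auto
  then show ?thesis
    using gamma_nonneg j beta_pos by (auto simp: alpha_eq beta_def)
qed (simp add: alpha_def)

lemma r_le_1: "i \<in> {0..J} \<Longrightarrow> j \<in> {0..J} \<Longrightarrow> r i j \<le> 1"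
  using r_stoch r_nonneg member_le_sum[of j "{0..J}" "r i"] by auto

lemma routing_bounds:
  "i \<in> {0..J} \<Longrightarrow> j \<in> {0..J} \<Longrightarrow> i \<noteq> j \<Longrightarrow> 0 \<le> r_alpha J r \<alpha> j i \<and> r_alpha J r \<alpha> j i \<le> 1"
  using r_nonneg r_le_1[of j i] alpha_bounds[of i] by (simp add: r_alpha_def mult_le_one)

lemma q_gamma_arrive: "i \<in> {1..J} \<Longrightarrow> Q n (arrive i n) = \<Lambda> * r 0 i * \<gamma> i"
  using beta_pos by (simp add: q_gamma_def jackson_q_arrive r_alpha_def alpha_eq)

lemma q_gamma_move: "i \<in> {1..J} \<Longrightarrow> j \<in> {1..J} \<Longrightarrow> i \<noteq> j \<Longrightarrow> 0 < n j \<Longrightarrow>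
    Q n (move j i n) = \<gamma> j * \<mu> j (n j) * r j i * \<alpha> i"
  by (simp add: q_gamma_def jackson_q_move r_alpha_def)

lemma q_gamma_depart: "j \<in> {1..J} \<Longrightarrow> 0 < n j \<Longrightarrow> Q n (depart j n) = \<gamma> j * \<mu> j (n j) * r j 0"
  by (simp add: q_gamma_def jackson_q_depart r_alpha_def alpha_def)

lemma service_nonneg: "j \<in> {1..J} \<Longrightarrow> 0 < k \<Longrightarrow> 0 \<le> \<gamma> j * \<mu> j k"
  using gamma_nonneg mu_pos' by (simp add: less_imp_le)

lemma q_gamma_nonneg: "0 \<le> Q x y"
  unfolding q_gamma_def
  using beta_pos lam_pos service_nonneg routing_bounds by (intro jackson_q_nonneg) auto

lemma finite_q_gamma_support: "finite {y. Q x y \<noteq> 0}"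
  unfolding q_gamma_def by (rule finite_jackson_q_support)

text \<open>Irreducibility of the routing matrix propagates \<open>\<eta> 0 > 0\<close> along the reversed
  edges.\<close>

lemma eta_pos: "j \<in> {0..J} \<Longrightarrow> 0 < \<eta> j"
proof -
  assume "j \<in> {0..J}"
  then have "(0, j) \<in> {(a, b). a \<in> {0..J} \<and> b \<in> {0..J} \<and> 0 < r a b}\<^sup>*"
    using r_irred by auto
  then show ?thesis
  proof (induction rule: rtrancl_induct)
    case base
    then show ?case
      using eta_0 lam_pos by simp
  next
    case (step a b)
    then have ab: "a \<in> {0..J}" "b \<in> {0..J}" "0 < r a b"
      by auto
    with step.IH have "0 < \<eta> b * r b a"
      using reversible by (metis mult_pos_pos)
    moreover have "0 \<le> r b a"
      using r_nonneg ab by auto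
    ultimately show ?case
      by (auto simp: zero_less_mult_iff)
  qed
qed

lemma marg_weight_pos: "j \<in> {1..J} \<Longrightarrow> 0 < (\<Prod>k\<in>{1..m}. \<eta> j / \<mu> j k)"
  using eta_pos[of j] mu_pos' by (intro prod_pos) auto

lemma normC_pos: "j \<in> {1..J} \<Longrightarrow> 0 < normC \<eta> \<mu> j"
  unfolding normC_def using C_finite marg_weight_pos by (intro suminf_pos) auto

lemma marg_pos: "j \<in> {1..J} \<Longrightarrow> 0 < marg \<eta> \<mu> j m"
  unfolding marg_def using normC_pos marg_weight_pos by simp

lemma marg_nonneg: "j \<in> {1..J} \<Longrightarrow> 0 \<le> marg \<eta> \<mu> j m"
  using marg_pos less_imp_le by blast

lemma marg_Suc: "marg \<eta> \<mu> j (Suc m) = marg \<eta> \<mu> j m * (\<eta> j / \<mu> j (Suc m))"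
  by (simp add: marg_def)

lemma marg_has_sum: "j \<in> {1..J} \<Longrightarrow> (marg \<eta> \<mu> j has_sum 1) UNIV"
proof -
  assume j: "j \<in> {1..J}"
  have "(\<lambda>n. \<Prod>k\<in>{1..n}. \<eta> j / \<mu> j k) sums normC \<eta> \<mu> j"
    unfolding normC_def using C_finite j by (simp add: summable_sums)
  then have "((\<lambda>n. \<Prod>k\<in>{1..n}. \<eta> j / \<mu> j k) has_sum normC \<eta> \<mu> j) UNIV"
    using marg_weight_pos[OF j] by (intro sums_nonneg_imp_has_sum) (auto intro: less_imp_le)
  from has_sum_cmult_left[OF this, of "1 / normC \<eta> \<mu> j"] show ?thesis
    using normC_pos[OF j] by (simp add: marg_def[abs_def])
qed

abbreviation \<xi> :: "(state \<Rightarrow> real) \<Rightarrow> state \<Rightarrow> real" where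
  "\<xi> \<equiv> xi_phi J \<eta> \<mu> \<gamma>"

lemma blocked_subset: "B \<subseteq> {1..J}"
  by (auto simp: blocked_def)

lemma working_subset: "W \<subseteq> {1..J}"
  by (auto simp: working_def)

lemma working_blocked_disjoint: "W \<inter> B = {}"
  by (auto simp: working_def)

lemma working_Un_blocked: "W \<union> B = {1..J}"
  by (auto simp: working_def blocked_def)

lemma finite_working: "finite W"
  using finite_subset[OF working_subset] by simp

lemma finite_blocked: "finite B"
  using finite_subset[OF blocked_subset] by simp

lemma working_iff: "j \<in> {1..J} \<Longrightarrow> j \<in> W \<longleftrightarrow> \<gamma> j \<noteq> 0"
  by (simp add: working_def blocked_def)

lemma prod_marg_arrive:
  assumes "finite I" "i \<in> I"
  shows "(\<Prod>j\<in>I. marg \<eta> \<mu> j (arrive i n j)) = (\<Prod>j\<in>I. marg \<eta> \<mu> j (n j)) * (\<eta> i / \<mu> i (Suc (n i)))"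
proof -
  have "(\<Prod>j\<in>I - {i}. marg \<eta> \<mu> j (arrive i n j)) = (\<Prod>j\<in>I - {i}. marg \<eta> \<mu> j (n j))"
    by (intro prod.cong) (auto simp: arrive_def)
  with assms show ?thesis
    by (simp add: prod.remove arrive_def marg_Suc mult_ac)
qed

lemma xi_phi_arrive:
  assumes "i \<in> W"
  shows "\<xi> \<psi> (arrive i n) = \<xi> \<psi> n * (\<eta> i / \<mu> i (Suc (n i)))"
proof -
  have "i \<notin> B"
    using assms working_blocked_disjoint by blast
  then have "restrict_state B (arrive i n) = restrict_state B n"
    by (auto simp: restrict_state_def arrive_def)
  then show ?thesis
    using prod_marg_arrive[OF finite_working assms] by (simp add: xi_phi_def mult_ac)
qed

lemma xi_arrive: "i \<in> {1..J} \<Longrightarrow> xi J \<eta> \<mu> (arrive i n) = xi J \<eta> \<mu> n * (\<eta> i / \<mu> i (Suc (n i)))"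
  by (simp add: xi_def prod_marg_arrive)

lemma balance_arrive:
  assumes i: "i \<in> {1..J}"
  shows "\<xi> \<psi> n * Q n (arrive i n) = \<xi> \<psi> (arrive i n) * Q (arrive i n) n"
proof -
  have in_rate: "Q (arrive i n) n = \<gamma> i * \<mu> i (Suc (n i)) * r i 0"
    using q_gamma_depart[OF i, of "arrive i n"] by (simp add: arrive_def depart_def)
  show ?thesis
  proof (cases "\<gamma> i = 0")
    case True
    then show ?thesis
      using in_rate q_gamma_arrive[OF i] by simp
  next
    case False
    then have "i \<in> W"
      using working_iff i by blast
    moreover have "\<mu> i (Suc (n i)) \<noteq> 0"
      using mu_pos'[OF i, of "Suc (n i)"] by simp
    moreover have "\<Lambda> * r 0 i = \<eta> i * r i 0"
      using reversible i eta_0 by force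
    ultimately show ?thesis
      using in_rate q_gamma_arrive[OF i] by (simp add: xi_phi_arrive field_simps)
  qed
qed

lemma balance_move:
  assumes i: "i \<in> {1..J}" and j: "j \<in> {1..J}" and "i \<noteq> j" "0 < n j"
  shows "\<xi> \<psi> n * Q n (move j i n) = \<xi> \<psi> (move j i n) * Q (move j i n) n"
proof -
  let ?m = "move j i n"
  have m_i: "?m i = Suc (n i)" and back_move: "move i j ?m = n"
    using assms by (auto simp: move_def)
  have in_rate: "Q ?m n = \<gamma> i * \<mu> i (Suc (n i)) * r i j * \<alpha> j"
    using q_gamma_move[OF j i, of ?m] assms by (simp add: m_i back_move)
  have out_rate: "Q n ?m = \<gamma> j * \<mu> j (n j) * r j i * \<alpha> i"
    using q_gamma_move assms by blast
  show ?thesis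
  proof (cases "\<gamma> i = 0 \<or> \<gamma> j = 0")
    case True
    then show ?thesis
      using in_rate out_rate alpha_eq[OF i] alpha_eq[OF j] by auto
  next
    case False
    then have "i \<in> W" "j \<in> W"
      using working_iff i j by blast+
    \<comment> \<open>Both states arise from \<open>depart j n\<close> by a single arrival.\<close>
    define n' where "n' = depart j n"
    have n_eq: "arrive j n' = n" and m_eq: "arrive i n' = ?m"
      and shift: "Suc (n' j) = n j" "n' i = n i"
      using assms by (simp_all add: n'_def arrive_def depart_def move_def)
    note xi_n = xi_phi_arrive[OF \<open>j \<in> W\<close>, of \<psi> n', unfolded n_eq shift]
    note xi_m = xi_phi_arrive[OF \<open>i \<in> W\<close>, of \<psi> n', unfolded m_eq shift]
    have "\<mu> i (Suc (n i)) \<noteq> 0" "\<mu> j (n j) \<noteq> 0"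
      using mu_pos'[OF i, of "Suc (n i)"] mu_pos'[OF j, of "n j"] assms(4) by auto
    then have "\<xi> \<psi> n * Q n ?m = \<xi> \<psi> n' * (\<eta> j * r j i) * (\<gamma> i * \<gamma> j / \<beta>)"
      "\<xi> \<psi> ?m * Q ?m n = \<xi> \<psi> n' * (\<eta> i * r i j) * (\<gamma> i * \<gamma> j / \<beta>)"
      unfolding xi_n xi_m in_rate out_rate alpha_eq[OF i] alpha_eq[OF j] by simp_all
    moreover have "\<eta> j * r j i = \<eta> i * r i j"
      using reversible i j by force
    ultimately show ?thesis
      by simp
  qed
qed

lemma xi_phi_detailed_balance: "\<xi> \<psi> x * Q x y = \<xi> \<psi> y * Q y x"
proof -
  have balance: "\<xi> \<psi> x * Q x y = \<xi> \<psi> y * Q y x" if "Q y x \<noteq> 0" for x y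
    using that[unfolded q_gamma_def]
  proof (cases rule: jackson_q_cases)
    case (arrival i)
    then show ?thesis
      using balance_arrive[of i \<psi> y] by simp
  next
    case (transfer j i)
    then show ?thesis
      using balance_move[of i j y \<psi>] by simp
  next
    case (departure j)
    then have "y = arrive j x"
      by (simp add: arrive_def depart_def)
    then show ?thesis
      using balance_arrive[OF \<open>j \<in> {1..J}\<close>, of \<psi> x] by simp
  qed
  show ?thesis
  proof (cases "Q y x = 0")
    case True
    show ?thesis
    proof (cases "Q x y = 0")
      case False
      then show ?thesis
        using balance[where x = y and y = x] by simp
    qed (simp add: True)
  qed (rule balance)
qed

lemma xi_phi_prob_dist:
  assumes "prob_dist (states B) \<psi>"
  shows "prob_dist S (\<xi> \<psi>)"
proof -
  let ?w = "\<lambda>m. \<Prod>j\<in>W. marg \<eta> \<mu> j (m j)"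
  have "(?w has_sum (\<Prod>j\<in>W. 1)) (states W)"
    using finite_working marg_has_sum marg_nonneg working_subset by (intro has_sum_prod_states) auto
  then have "((\<lambda>(m, b). ?w m * \<psi> b) has_sum 1 * 1) (states W \<times> states B)"
    using assms marg_nonneg working_subset
    by (intro has_sum_product_nonneg) (auto simp: prob_dist_def intro!: prod_nonneg)
  also have "?this \<longleftrightarrow> (\<xi> \<psi> has_sum 1) S"
  proof (rule has_sum_reindex_bij_witness[where i = "\<lambda>n. (restrict_state W n, restrict_state B n)"
        and j = "\<lambda>(m, b) k. m k + b k"])
    show "\<xi> \<psi> ((\<lambda>(m, b) k. m k + b k) mb) = (\<lambda>(m, b). ?w m * \<psi> b) mb"
      if mb_in: "mb \<in> states W \<times> states B" for mb
    proof -
      obtain m b where mb: "mb = (m, b)" "m \<in> states W" "b \<in> states B"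
        using mb_in by blast
      have "restrict_state B (\<lambda>k. m k + b k) = b" "(\<Prod>j\<in>W. marg \<eta> \<mu> j (m j + b j)) = ?w m"
        using mb working_blocked_disjoint
        by (auto simp: restrict_state_def states_def fun_eq_iff intro!: prod.cong)
      then show ?thesis
        using mb by (simp add: xi_phi_def)
    qed
  qed (auto simp: restrict_state_def states_def fun_eq_iff working_def blocked_def)
  finally show ?thesis
    using assms marg_nonneg working_subset
    by (auto simp: prob_dist_def xi_phi_def restrict_state_def states_def
        intro!: mult_nonneg_nonneg prod_nonneg)
qed

lemma xi_eq_xi_phi: "xi J \<eta> \<mu> = \<xi> (\<lambda>b. \<Prod>j\<in>B. marg \<eta> \<mu> j (b j))"
proof
  fix n
  have "xi J \<eta> \<mu> n = (\<Prod>j\<in>W \<union> B. marg \<eta> \<mu> j (n j))"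
    by (simp add: xi_def working_Un_blocked)
  also have "\<dots> = (\<Prod>j\<in>W. marg \<eta> \<mu> j (n j)) * (\<Prod>j\<in>B. marg \<eta> \<mu> j (n j))"
    using finite_working finite_blocked working_blocked_disjoint by (rule prod.union_disjoint)
  finally show "xi J \<eta> \<mu> n = \<xi> (\<lambda>b. \<Prod>j\<in>B. marg \<eta> \<mu> j (b j)) n"
    by (simp add: xi_phi_def restrict_state_def)
qed

lemma blocked_marginals_prob_dist: "prob_dist (states B) (\<lambda>b. \<Prod>j\<in>B. marg \<eta> \<mu> j (b j))"
proof -
  have "((\<lambda>b. \<Prod>j\<in>B. marg \<eta> \<mu> j (b j)) has_sum (\<Prod>j\<in>B. 1)) (states B)"
    using finite_blocked marg_has_sum marg_nonneg blocked_subset by (intro has_sum_prod_states) auto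
  then show ?thesis
    using marg_nonneg blocked_subset by (auto simp: prob_dist_def intro!: prod_nonneg)
qed

lemma xi_phi_stationary: "prob_dist (states B) \<psi> \<Longrightarrow> stationary_dist S Q (\<xi> \<psi>)"
  by (intro stationary_dist_if_detailed_balance xi_phi_prob_dist finite_q_gamma_support
      xi_phi_detailed_balance)

lemma xi_stationary: "stationary_dist S Q (xi J \<eta> \<mu>)"
  unfolding xi_eq_xi_phi by (intro xi_phi_stationary blocked_marginals_prob_dist)

lemma q_gamma_keeps_blocked:
  assumes "Q x y \<noteq> 0" "j \<in> B"
  shows "y j = x j"
proof -
  have j: "\<gamma> j = 0"
    using assms(2) by (simp add: blocked_def)
  from assms(1)[unfolded q_gamma_def] show ?thesis
  proof (cases rule: jackson_q_cases)
    case (arrival i)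
    then have "i \<noteq> j"
      using assms(1) q_gamma_arrive j by auto
    with arrival show ?thesis
      by (simp add: arrive_def)
  next
    case (transfer k i)
    then have "k \<noteq> j" "i \<noteq> j"
      using assms(1) q_gamma_move[of i k x] alpha_eq j by auto
    with transfer show ?thesis
      by (simp add: move_def)
  next
    case (departure k)
    then have "k \<noteq> j"
      using assms(1) q_gamma_depart j by auto
    with departure show ?thesis
      by (simp add: depart_def)
  qed
qed

lemma fiber_closed: "closed_subspace S Q (fiber J \<gamma> b)"
  using q_gamma_keeps_blocked by (fastforce simp: closed_subspace_def fiber_def)

lemma Union_fibers: "(\<Union>b\<in>states B. fiber J \<gamma> b) = S"
proof (intro equalityI subsetI)
  fix n assume "n \<in> S"
  then have "n \<in> fiber J \<gamma> (restrict_state B n)" "restrict_state B n \<in> states B"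
    by (auto simp: fiber_def restrict_state_def states_def)
  then show "n \<in> (\<Union>b\<in>states B. fiber J \<gamma> b)"
    by blast
qed (auto simp: fiber_def)

lemma inj_on_fiber: "inj_on (fiber J \<gamma>) (states B)"
proof (rule inj_onI)
  fix b b' assume b: "b \<in> states B" "b' \<in> states B" and eq: "fiber J \<gamma> b = fiber J \<gamma> b'"
  have "b \<in> fiber J \<gamma> b"
    using b blocked_subset by (auto simp: fiber_def states_def)
  then have "b \<in> fiber J \<gamma> b'"
    by (simp only: eq)
  then have "\<forall>j\<in>B. b j = b' j"
    by (simp add: fiber_def)
  with b show "b = b'"
    by (auto simp: states_def fun_eq_iff)
qed

lemma infinite_fibers:
  assumes "B \<noteq> {}"
  shows "infinite (fiber J \<gamma> ` states B)"
proof
  assume fin: "finite (fiber J \<gamma> ` states B)"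
  obtain j where "j \<in> B"
    using assms by blast
  then have "range (\<lambda>k. (\<lambda>_. 0)(j := k)) \<subseteq> states B"
    by (auto simp: states_def)
  moreover have "inj (\<lambda>k. (\<lambda>_. 0::nat)(j := k))"
    by (rule injI) (metis fun_upd_same)
  moreover have "finite (states B)"
    using finite_imageD[OF fin inj_on_fiber] .
  ultimately show False
    by (meson finite_imageD finite_subset infinite_UNIV_nat)
qed

lemma not_irreducible:
  assumes "B \<noteq> {}"
  shows "\<not> irreducible_chain S Q"
proof
  assume irreducible: "irreducible_chain S Q"
  obtain j where j: "j \<in> B"
    using assms by blast
  have reach_keeps: "y j = x j" if "(x, y) \<in> (trans_rel S Q)\<^sup>*" for x y
    using that
  proof (induction rule: rtrancl_induct)
    case (step y z)
    then show ?case
      using q_gamma_keeps_blocked[OF _ j, of y z] by (auto simp: trans_rel_def)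
  qed simp
  have "(\<lambda>_. 0) \<in> S" "arrive j (\<lambda>_. 0) \<in> S"
    using j blocked_subset by (auto simp: states_def arrive_def)
  with irreducible have "((\<lambda>_. 0), arrive j (\<lambda>_. 0)) \<in> (trans_rel S Q)\<^sup>*"
    by (simp add: irreducible_chain_def)
  from reach_keeps[OF this] show False
    by (simp add: arrive_def)
qed

lemma xi_prob_dist: "prob_dist S (xi J \<eta> \<mu>)"
  unfolding xi_eq_xi_phi by (intro xi_phi_prob_dist blocked_marginals_prob_dist)

lemma xi_pos: "0 < xi J \<eta> \<mu> n"
  unfolding xi_def using marg_pos by (intro prod_pos) auto

lemma xi_detailed_balance: "xi J \<eta> \<mu> x * Q x y = xi J \<eta> \<mu> y * Q y x"
  unfolding xi_eq_xi_phi by (rule xi_phi_detailed_balance)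

lemma sum_xi_le_1: "finite F \<Longrightarrow> F \<subseteq> S \<Longrightarrow> sum (xi J \<eta> \<mu>) F \<le> 1"
  using xi_prob_dist xi_pos by (intro finite_sum_le_has_sum) (auto simp: prob_dist_def less_imp_le)

definition rate_bound :: "state \<Rightarrow> real" where
  "rate_bound x = \<beta> * \<Lambda> + (\<Sum>j\<in>{j\<in>{1..J}. 0 < x j}. \<gamma> j * \<mu> j (x j))"

lemma rate_bound_nonneg: "0 \<le> rate_bound x"
  unfolding rate_bound_def using beta_pos lam_pos service_nonneg
  by (intro add_nonneg_nonneg sum_nonneg) auto

lemma service_le_rate_bound:
  assumes "j \<in> {1..J}" "0 < x j"
  shows "\<gamma> j * \<mu> j (x j) \<le> rate_bound x"
proof -
  have "\<gamma> j * \<mu> j (x j) \<le> (\<Sum>j\<in>{j\<in>{1..J}. 0 < x j}. \<gamma> j * \<mu> j (x j))"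
    using assms service_nonneg by (intro member_le_sum) auto
  moreover have "0 \<le> \<beta> * \<Lambda>"
    using beta_pos lam_pos by simp
  ultimately show ?thesis
    by (simp add: rate_bound_def)
qed

lemma q_gamma_le_rate_bound: "Q x y \<le> rate_bound x"
proof (cases "Q x y = 0")
  case True
  with rate_bound_nonneg show ?thesis
    by simp
next
  case False
  let ?rt = "r_alpha J r \<alpha>"
  from False[unfolded q_gamma_def] show ?thesis
  proof (cases rule: jackson_q_cases)
    case (arrival i)
    then have "Q x y = \<beta> * \<Lambda> * ?rt 0 i"
      by (simp add: q_gamma_def jackson_q_arrive)
    also have "\<dots> \<le> \<beta> * \<Lambda>"
      using routing_bounds[of i 0] arrival beta_pos lam_pos by (intro mult_left_le) auto
    also have "\<dots> \<le> rate_bound x"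
      using service_nonneg by (auto simp: rate_bound_def intro!: sum_nonneg)
    finally show ?thesis .
  next
    case (transfer j i)
    then have "Q x y = \<gamma> j * \<mu> j (x j) * ?rt j i"
      by (simp add: q_gamma_def jackson_q_move)
    also have "\<dots> \<le> \<gamma> j * \<mu> j (x j)"
      using routing_bounds[of i j] service_nonneg[of j "x j"] transfer by (intro mult_left_le) auto
    also have "\<dots> \<le> rate_bound x"
      using transfer by (intro service_le_rate_bound)
    finally show ?thesis .
  next
    case (departure j)
    then have "Q x y = \<gamma> j * \<mu> j (x j) * ?rt j 0"
      by (simp add: q_gamma_def jackson_q_depart)
    also have "\<dots> \<le> \<gamma> j * \<mu> j (x j)"
      using routing_bounds[of 0 j] service_nonneg[of j "x j"] departure
      by (intro mult_left_le) auto
    also have "\<dots> \<le> rate_bound x"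
      using departure by (intro service_le_rate_bound)
    finally show ?thesis .
  qed
qed

lemma qout_le_rate_bound: "qout S Q x \<le> real (J + J * J + J) * rate_bound x"
proof -
  let ?T = "{y \<in> S - {x}. Q x y \<noteq> 0}"
  have "card ?T \<le> J + J * J + J"
    using card_jackson_q_support[of J "\<beta> * \<Lambda>" _ _ x] finite_q_gamma_support[of x]
    by (auto simp: q_gamma_def intro: le_trans[OF card_mono])
  moreover note rate_bound_nonneg[of x]
  ultimately have "real (card ?T) * rate_bound x \<le> real (J + J * J + J) * rate_bound x"
    by (intro mult_right_mono) (simp_all only: of_nat_le_iff)
  moreover have "qout S Q x \<le> real (card ?T) * rate_bound x"
    using has_sum_qout(2)[where q = Q and x = x and S = S, OF finite_q_gamma_support]
      sum_mono[of ?T "Q x" "\<lambda>_. rate_bound x"] q_gamma_le_rate_bound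
    by simp
  ultimately show ?thesis
    by linarith
qed

lemma arrive_depart: "0 < n j \<Longrightarrow> arrive j (depart j n) = n"
  by (auto simp: arrive_def depart_def)

text \<open>The identity \<open>xi J \<eta> \<mu> n * \<mu> j (n j) = xi J \<eta> \<mu> (depart j n) * \<eta> j\<close> turns the sum
  into a sum of \<open>xi J \<eta> \<mu>\<close> over distinct states.\<close>

lemma sum_xi_service_le:
  assumes j: "j \<in> {1..J}" and F: "finite F" "F \<subseteq> S"
  shows "(\<Sum>x\<in>{x\<in>F. 0 < x j}. xi J \<eta> \<mu> x * \<mu> j (x j)) \<le> \<eta> j"
proof -
  let ?F = "{x \<in> F. 0 < x j}"
  have "(\<Sum>x\<in>?F. xi J \<eta> \<mu> x * \<mu> j (x j)) = (\<Sum>x\<in>?F. xi J \<eta> \<mu> (depart j x) * \<eta> j)"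
  proof (intro sum.cong refl)
    fix x assume "x \<in> ?F"
    then have "arrive j (depart j x) = x" "Suc (depart j x j) = x j" "\<mu> j (x j) \<noteq> 0"
      using mu_pos'[OF j, of "x j"] by (simp_all add: arrive_depart) (simp add: depart_def)
    then show "xi J \<eta> \<mu> x * \<mu> j (x j) = xi J \<eta> \<mu> (depart j x) * \<eta> j"
      using xi_arrive[OF j, of "depart j x"] by simp
  qed
  also have "\<dots> = \<eta> j * sum (xi J \<eta> \<mu>) (depart j ` ?F)"
  proof -
    have "inj_on (depart j) ?F"
      by (rule inj_onI) (metis (mono_tags, lifting) arrive_depart mem_Collect_eq)
    then show ?thesis
      by (simp add: sum.reindex sum_distrib_left mult.commute)
  qed
  also have "\<dots> \<le> \<eta> j * 1"
    using F eta_pos[of j] j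
    by (intro mult_left_mono sum_xi_le_1) (auto simp: depart_def states_def)
  finally show ?thesis
    by simp
qed

lemma sum_xi_rate_bound:
  assumes "finite F"
  shows "(\<Sum>x\<in>F. xi J \<eta> \<mu> x * rate_bound x) = \<beta> * \<Lambda> * sum (xi J \<eta> \<mu>) F
    + (\<Sum>j\<in>{1..J}. \<gamma> j * (\<Sum>x\<in>{x\<in>F. 0 < x j}. xi J \<eta> \<mu> x * \<mu> j (x j)))"
proof -
  have "(\<Sum>x\<in>F. xi J \<eta> \<mu> x * rate_bound x) = \<beta> * \<Lambda> * sum (xi J \<eta> \<mu>) F
      + (\<Sum>x\<in>F. \<Sum>j\<in>{j\<in>{1..J}. 0 < x j}. \<gamma> j * (xi J \<eta> \<mu> x * \<mu> j (x j)))"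
    by (simp add: rate_bound_def distrib_left sum.distrib sum_distrib_left mult_ac)
  also have "(\<Sum>x\<in>F. \<Sum>j\<in>{j\<in>{1..J}. 0 < x j}. \<gamma> j * (xi J \<eta> \<mu> x * \<mu> j (x j)))
      = (\<Sum>j\<in>{1..J}. \<Sum>x\<in>{x\<in>F. 0 < x j}. \<gamma> j * (xi J \<eta> \<mu> x * \<mu> j (x j)))"
    using assms by (rule sum.swap_restrict) simp
  finally show ?thesis
    by (simp add: sum_distrib_left)
qed

lemma summable_xi_qout: "(\<lambda>x. xi J \<eta> \<mu> x * qout S Q x) summable_on S"
proof (rule nonneg_bdd_above_summable_on)
  show "0 \<le> xi J \<eta> \<mu> x * qout S Q x" for x
    using xi_pos[of x] has_sum_qout(2)[where q = Q and x = x and S = S, OF finite_q_gamma_support]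
      q_gamma_nonneg
    by (simp add: sum_nonneg)
  let ?M = "real (J + J * J + J)"
  show "bdd_above (sum (\<lambda>x. xi J \<eta> \<mu> x * qout S Q x) ` {F. F \<subseteq> S \<and> finite F})"
  proof (rule bdd_aboveI2)
    fix F assume "F \<in> {F. F \<subseteq> S \<and> finite F}"
    then have F: "F \<subseteq> S" "finite F"
      by auto
    have "(\<Sum>x\<in>F. xi J \<eta> \<mu> x * qout S Q x) \<le> (\<Sum>x\<in>F. ?M * (xi J \<eta> \<mu> x * rate_bound x))"
      using qout_le_rate_bound xi_pos by (intro sum_mono) (simp add: less_imp_le mult_left_mono)
    also have "\<dots> = ?M * (\<beta> * \<Lambda> * sum (xi J \<eta> \<mu>) F
        + (\<Sum>j\<in>{1..J}. \<gamma> j * (\<Sum>x\<in>{x\<in>F. 0 < x j}. xi J \<eta> \<mu> x * \<mu> j (x j))))"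
      using F by (simp add: sum_xi_rate_bound flip: sum_distrib_left)
    also have "\<dots> \<le> ?M * (\<beta> * \<Lambda> * 1 + (\<Sum>j\<in>{1..J}. \<gamma> j * \<eta> j))"
      using F beta_pos lam_pos gamma_nonneg sum_xi_le_1 sum_xi_service_le
      by (intro mult_left_mono add_mono sum_mono) auto
    finally show "(\<Sum>x\<in>F. xi J \<eta> \<mu> x * qout S Q x)
        \<le> ?M * (\<beta> * \<Lambda> * 1 + (\<Sum>j\<in>{1..J}. \<gamma> j * \<eta> j))" .
  qed
qed

lemma gamma_pos: "B = {} \<Longrightarrow> j \<in> {1..J} \<Longrightarrow> 0 < \<gamma> j"
  using gamma_nonneg by (force simp: blocked_def)

lemma qout_pos:
  assumes "B = {}" "x \<in> S"
  shows "0 < qout S Q x"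
proof -
  obtain i where i0: "i \<in> {0..J}" "0 < r 0 i"
  proof (rule ccontr)
    assume "\<not> thesis"
    then have "(\<Sum>j\<in>{0..J}. r 0 j) \<le> 0"
      using that by (intro sum_nonpos) force
    with r_stoch show False
      by simp
  qed
  have "i \<noteq> 0"
    using i0(2) r_00 by (cases "i = 0") auto
  with i0 have i: "i \<in> {1..J}" "0 < r 0 i"
    by auto
  have "0 < Q x (arrive i x)"
    using q_gamma_arrive[OF i(1)] lam_pos i gamma_pos[OF assms(1) i(1)] by simp
  moreover have "arrive i x \<in> {y \<in> S - {x}. Q x y \<noteq> 0}"
    using calculation i assms(2) by (auto simp: arrive_def states_def fun_eq_iff)
  moreover have "finite {y \<in> S - {x}. Q x y \<noteq> 0}"
    using finite_q_gamma_support[of x] by (rule rev_finite_subset) auto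
  ultimately have "Q x (arrive i x) \<le> qout S Q x"
    unfolding has_sum_qout(2)[where q = Q and x = x and S = S, OF finite_q_gamma_support]
    using q_gamma_nonneg by (intro member_le_sum) auto
  with \<open>0 < Q x (arrive i x)\<close> show ?thesis
    by simp
qed

lemma sym_trans_rel: "sym (trans_rel S Q)"
proof (rule symI)
  fix x y assume xy: "(x, y) \<in> trans_rel S Q"
  then have "0 < xi J \<eta> \<mu> x * Q x y"
    using xi_pos by (auto simp: trans_rel_def)
  also have "xi J \<eta> \<mu> x * Q x y = xi J \<eta> \<mu> y * Q y x"
    by (rule xi_detailed_balance)
  finally have "0 < Q y x"
    using xi_pos[of y] by (simp add: zero_less_mult_iff)
  with xy show "(y, x) \<in> trans_rel S Q"
    by (auto simp: trans_rel_def)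
qed

lemma depart_0: "x \<in> S \<Longrightarrow> depart 0 x = x"
  by (auto simp: depart_def states_def)

lemma depart_transition:
  assumes "B = {}" "a \<in> {1..J}" "0 < x a" "0 < r a 0" "x \<in> S"
  shows "(x, depart a x) \<in> trans_rel S Q"
proof -
  have "0 < Q x (depart a x)"
    using q_gamma_depart[of a x] gamma_pos[of a] mu_pos'[of a "x a"] assms by simp
  moreover have "x \<noteq> depart a x" "depart a x \<in> S"
    using assms by (auto simp: depart_def states_def fun_eq_iff)
  ultimately show ?thesis
    using assms by (simp add: trans_rel_def)
qed

lemma move_transition:
  assumes "B = {}" "a \<in> {1..J}" "b \<in> {1..J}" "b \<noteq> a" "0 < x a" "0 < r a b" "x \<in> S"
  shows "(x, move a b x) \<in> trans_rel S Q"
proof -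
  have "0 < Q x (move a b x)"
    using q_gamma_move[of b a x] gamma_pos[of a] gamma_pos[of b] mu_pos'[of a "x a"] alpha_eq[of b]
      beta_pos assms
    by simp
  moreover have "x \<noteq> move a b x" "move a b x \<in> S"
    using assms by (auto simp: move_def states_def fun_eq_iff)
  ultimately show ?thesis
    using assms by (simp add: trans_rel_def)
qed

text \<open>A customer at node \<open>a\<close> can leave the network along any routing path from \<open>a\<close>
  to \<open>0\<close>, since with \<open>B = {}\<close> every node serves and every node accepts.\<close>

lemma reach_depart:
  assumes "B = {}" and path: "(a, 0) \<in> {(a, b). a \<in> {0..J} \<and> b \<in> {0..J} \<and> 0 < r a b}\<^sup>*"
  shows "x \<in> S \<Longrightarrow> (a \<noteq> 0 \<Longrightarrow> 0 < x a) \<Longrightarrow> (x, depart a x) \<in> (trans_rel S Q)\<^sup>*"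
  using path
proof (induction arbitrary: x rule: converse_rtrancl_induct)
  case base
  then show ?case
    by (simp add: depart_0)
next
  case (step a b)
  then have ab: "a \<in> {0..J}" "b \<in> {0..J}" "0 < r a b"
    by auto
  show ?case
  proof (cases "a = 0 \<or> b = a")
    case True
    then show ?thesis
      using step by (auto simp: depart_0)
  next
    case False
    then have a: "a \<in> {1..J}" "0 < x a" "b \<noteq> a"
      using ab step.prems by auto
    show ?thesis
    proof (cases "b = 0")
      case True
      then show ?thesis
        using depart_transition[of a x, OF assms(1) a(1,2)] ab step.prems by auto
    next
      case False
      then have b: "b \<in> {1..J}"
        using ab by auto
      have move: "(x, move a b x) \<in> trans_rel S Q"
        using move_transition[of a b x, OF assms(1) a(1) b a(3,2)] ab step.prems by simp
      then have "move a b x \<in> S" "0 < move a b x b"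
        by (simp_all add: trans_rel_def move_def)
      then have "(move a b x, depart b (move a b x)) \<in> (trans_rel S Q)\<^sup>*"
        using step.IH by blast
      moreover have "depart b (move a b x) = depart a x"
        using a by (auto simp: move_def depart_def fun_eq_iff)
      ultimately show ?thesis
        using move by simp
    qed
  qed
qed

lemma reach_empty:
  assumes "B = {}"
  shows "x \<in> S \<Longrightarrow> (x, \<lambda>_. 0) \<in> (trans_rel S Q)\<^sup>*"
proof (induction "sum x {1..J}" arbitrary: x rule: less_induct)
  case less
  show ?case
  proof (cases "\<forall>j\<in>{1..J}. x j = 0")
    case True
    with less.prems have "x = (\<lambda>_. 0)"
      by (auto simp: states_def fun_eq_iff)
    then show ?thesis
      by simp
  next
    case False
    then obtain j where j: "j \<in> {1..J}" "0 < x j"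
      by auto
    then have "(x, depart j x) \<in> (trans_rel S Q)\<^sup>*"
      using r_irred less.prems by (intro reach_depart[OF assms]) auto
    moreover have "sum (depart j x) {1..J} < sum x {1..J}"
      using j by (intro sum_strict_mono_ex1) (auto simp: depart_def)
    then have "(depart j x, \<lambda>_. 0) \<in> (trans_rel S Q)\<^sup>*"
      using less.hyps less.prems by (auto simp: depart_def states_def)
    ultimately show ?thesis
      by simp
  qed
qed

lemma irreducible: "B = {} \<Longrightarrow> irreducible_chain S Q"
  unfolding irreducible_chain_def
  using reach_empty sym_trans_rel by (metis rtrancl_trans sym_rtrancl symD)

lemma ergodic: "B = {} \<Longrightarrow> ergodic S Q"
proof -
  assume "B = {}"
  then interpret reversible_chain S Q "xi J \<eta> \<mu>"
  proof unfold_locales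
    show "finite {y \<in> S. y \<noteq> x \<and> Q x y \<noteq> 0}" for x
      using finite_q_gamma_support[of x] by (rule rev_finite_subset) auto
    show "xi J \<eta> \<mu> x * Q x y = xi J \<eta> \<mu> y * Q y x" for x y
      by (rule xi_detailed_balance)
    show "xi J \<eta> \<mu> summable_on S"
      using xi_prob_dist by (auto simp: prob_dist_def summable_on_def)
  qed (use \<open>B = {}\<close> q_gamma_nonneg qout_pos xi_pos summable_xi_qout in auto)
  show "ergodic S Q"
    using \<open>B = {}\<close> irreducible pos_recurrent_everywhere by (simp add: ergodic_def)
qed

end

theorem theorem3p6:
  fixes J :: nat
    and lam :: "nat \<Rightarrow> real"        \<comment> \<open>external arrival rates \<lambda>_j\<close>
    and \<mu> :: "nat \<Rightarrow> nat \<Rightarrow> real"     \<comment> \<open>service intensities \<mu>_j(k)\<close>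
    and r :: "nat \<Rightarrow> nat \<Rightarrow> real"     \<comment> \<open>extended routing matrix on {0..J}\<close>
    and \<eta> :: "nat \<Rightarrow> real"           \<comment> \<open>extended traffic solution\<close>
    and \<gamma> :: "nat \<Rightarrow> real"
  defines "\<Lambda> \<equiv> (\<Sum>j\<in>{1..J}. lam j)"
  assumes lam_nonneg: "\<forall>j\<in>{1..J}. 0 \<le> lam j"
    and lam_pos: "0 < \<Lambda>"
    and mu_pos: "\<forall>j\<in>{1..J}. \<forall>k\<ge>1. 0 < \<mu> j k"
    and r_nonneg: "\<forall>i\<in>{0..J}. \<forall>j\<in>{0..J}. 0 \<le> r i j"
    and r_stoch: "\<forall>i\<in>{0..J}. (\<Sum>j\<in>{0..J}. r i j) = 1"
    and r_irred: "\<forall>i\<in>{0..J}. \<forall>j\<in>{0..J}.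
                    (i, j) \<in> {(a, b). a \<in> {0..J} \<and> b \<in> {0..J} \<and> 0 < r a b}\<^sup>*"
    and r_0: "\<forall>j\<in>{1..J}. r 0 j = lam j / \<Lambda>"
    and r_00: "r 0 0 = 0"
    and eta_0: "\<eta> 0 = \<Lambda>"
    and eta_traffic: "\<forall>j\<in>{0..J}. \<eta> j = (\<Sum>i\<in>{0..J}. \<eta> i * r i j)"
    and reversible: "\<forall>i\<in>{0..J}. \<forall>j\<in>{0..J}. \<eta> i * r i j = \<eta> j * r j i"
    and C_finite: "\<forall>j\<in>{1..J}. summable (\<lambda>n. \<Prod>k\<in>{1..n}. \<eta> j / \<mu> j k)"
    and X_ergodic: "ergodic (states {1..J}) (jackson_q J \<Lambda> \<mu> r)"
    and gamma_nonneg: "\<forall>j\<in>{1..J}. 0 \<le> \<gamma> j"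
  shows "stationary_dist (states {1..J}) (q_gamma J \<Lambda> \<mu> r \<gamma>) (xi J \<eta> \<mu>)
       \<and> (blocked J \<gamma> = {} \<longrightarrow> ergodic (states {1..J}) (q_gamma J \<Lambda> \<mu> r \<gamma>))
       \<and> (blocked J \<gamma> \<noteq> {} \<longrightarrow>
            \<not> irreducible_chain (states {1..J}) (q_gamma J \<Lambda> \<mu> r \<gamma>)
          \<and> (\<forall>b\<in>states (blocked J \<gamma>).
               closed_subspace (states {1..J}) (q_gamma J \<Lambda> \<mu> r \<gamma>) (fiber J \<gamma> b))
          \<and> (\<Union>b\<in>states (blocked J \<gamma>). fiber J \<gamma> b) = states {1..J}
          \<and> infinite (fiber J \<gamma> ` states (blocked J \<gamma>))
          \<and> (\<forall>\<phi>. prob_dist (states (blocked J \<gamma>)) \<phi> \<longrightarrow>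
               stationary_dist (states {1..J}) (q_gamma J \<Lambda> \<mu> r \<gamma>) (xi_phi J \<eta> \<mu> \<gamma> \<phi>)))"
proof -
  interpret modified_jackson_network J \<Lambda> \<mu> r \<eta> \<gamma>
    using lam_pos mu_pos r_nonneg r_stoch r_irred r_00 eta_0 reversible C_finite gamma_nonneg
    by unfold_locales
  show ?thesis
    using xi_stationary ergodic not_irreducible fiber_closed Union_fibers infinite_fibers
      xi_phi_stationary
    by blast
qed

end
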